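(* Assume the conductances are i.i.d. with law $\mu$ supported in $[1,\infty)$. There exists a constant $C>0$ such that for $\mathbb{P}$-almost every walk scheme $m$, all $t\geq0$, and every function $f=D_{i}g$ with $-d\leq i\leq d$ and $g\colon\mathbb{Z}^d\times\Omega\to\mathbb{R}$ local, translation invariant and with $\mathbb{E}[g^{2}]<\infty$, it holds \[ \mathbb{E}\left[\left(P_{t}^{m}f(0,\omega)\right)^{2}\right]\leq C\,\#\mathrm{supp}(g)^{2}\frac{\mathbb{E}[g^{2}]}{(t+1)^{\frac{d}{2}+1}}, \] where the expectation $\mathbb{E}$ is over $\omega\sim\mathbb{P}$ with $m$ fixed.
   Context: $\mathbb{B}^{d}$: unoriented nearest-neighbour edges of $\mathbb{Z}^{d}$; $\Omega=[0,\infty)^{\mathbb{B}^{d}}$; $\mathbb{P}=\mu^{\mathbb{B}^{d}}$ with expectation $\mathbb{E}$. A walk scheme is a fixed environment $m\in\Omega$ used to drive the walk: $(X_t)$ is the continuous-time Markov chain on $\mathbb{Z}^d$ jumping from $x$ to a neighbour $y$ at rate $m_{x,y}$, with law $P_x^m$ from $x$, and $P_{t}^{m}f(x,\omega)=\sum_{y\in\mathbb{Z}^{d}}P_{x}^{m}(X_{t}=y)f(y,\omega)$. $e_{1},\dots,e_{d}$ is the canonical basis, $e_{-i}=-e_{i}$, $e_0=0$, and $D_{i}g(y,\omega)=g(y+e_{i},\omega)-g(y,\omega)$. Translation invariance: $g(x,\omega)=g(0,\theta_{x}\omega)$ with $(\theta_{z}\omega)_{x,y}=\omega_{x+z,y+z}$;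 local: $g(0,\cdot)$ depends on finitely many conductances, the smallest such set of edges being $\mathrm{supp}(g)$, and $\#\mathrm{supp}(g)$ is the number of sites of $\mathbb{Z}^d$ contained in $\mathrm{supp}(g)$; $\mathbb{E}[g^2]:=\mathbb{E}[g(0,\cdot)^2]$. *)

theory Defs
  imports "HOL-Probability.Probability"
begin

text \<open>Lattice points of Z^d are vectors int^'d, with d = CARD('d).\<close>

type_synonym 'd site = "int ^ 'd"
type_synonym 'd env = "'d site set \<Rightarrow> real"

definition unitv :: "'d::finite \<Rightarrow> 'd site" where
  "unitv j = (\<chi> k. if k = j then 1 else 0)"

text \<open>The 2d nonzero directions e_i, i in {-d..d}, i ~= 0.\<close>
definition units :: "('d::finite) site set" where
  "units = range unitv \<union> uminus ` range unitv"

definition lattice_edges :: "('d::finite) site set set" where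
  "lattice_edges = {{x, x + unitv j} | x j. True}"

definition Omega :: "('d::finite) env set" where
  "Omega = PiE lattice_edges (\<lambda>_. {0..})"

definition cond_measure :: "real measure \<Rightarrow> ('d::finite) env measure" where
  "cond_measure \<mu> = PiM lattice_edges (\<lambda>_. \<mu>)"

definition shift :: "('d::finite) site \<Rightarrow> 'd env \<Rightarrow> 'd env" where
  "shift z \<omega> = (\<lambda>e. \<omega> ((\<lambda>v. v + z) ` e))"

definition rate :: "('d::finite) env \<Rightarrow> 'd site \<Rightarrow> 'd site \<Rightarrow> real" where
  "rate m x y = (if y - x \<in> units then m {x, y} else 0)"

definition gen :: "('d::finite) env \<Rightarrow> 'd site \<Rightarrow> 'd site \<Rightarrow> real" where
  "gen m x y = (if x = y then - (\<Sum>v\<in>units. rate m x (x + v)) else rate m x y)"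

text \<open>Powers of the generator of the chain killed upon leaving the finite set B.\<close>
fun qpow :: "('d::finite) site set \<Rightarrow> 'd env \<Rightarrow> nat \<Rightarrow> 'd site \<Rightarrow> 'd site \<Rightarrow> real" where
  "qpow B m 0 x y = (if x = y \<and> x \<in> B then 1 else 0)"
| "qpow B m (Suc n) x y =
     (if x \<in> B then (\<Sum>z\<in>B. gen m x z * qpow B m n z y) else 0)"

definition box :: "nat \<Rightarrow> ('d::finite) site set" where
  "box N = {x. \<forall>k. \<bar>x $ k\<bar> \<le> int N}"

definition killed_kernel :: "nat \<Rightarrow> ('d::finite) env \<Rightarrow> real \<Rightarrow> 'd site \<Rightarrow> 'd site \<Rightarrow> real" where
  "killed_kernel N m t x y = (\<Sum>n. t ^ n / fact n * qpow (box N) m n x y)"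

text \<open>P^m_x(X_t = y) for the (minimal) continuous-time Markov chain with rates m:
  the increasing limit of the killed kernels.\<close>
definition kernel :: "('d::finite) env \<Rightarrow> real \<Rightarrow> 'd site \<Rightarrow> 'd site \<Rightarrow> real" where
  "kernel m t x y = lim (\<lambda>N. killed_kernel N m t x y)"

definition Pt :: "('d::finite) env \<Rightarrow> real \<Rightarrow> ('d site \<Rightarrow> 'd env \<Rightarrow> real) \<Rightarrow> 'd site \<Rightarrow> 'd env \<Rightarrow> real" where
  "Pt m t f x \<omega> = infsum (\<lambda>y. kernel m t x y * f y \<omega>) UNIV"

definition Dgrad :: "('d::finite) site \<Rightarrow> ('d site \<Rightarrow> 'd env \<Rightarrow> real) \<Rightarrow> 'd site \<Rightarrow> 'd env \<Rightarrow> real" where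
  "Dgrad v g y \<omega> = g (y + v) \<omega> - g y \<omega>"

definition determines :: "('d::finite) site set set \<Rightarrow> ('d env \<Rightarrow> real) \<Rightarrow> bool" where
  "determines S h \<longleftrightarrow> (\<forall>\<omega>\<in>Omega. \<forall>\<omega>'\<in>Omega. (\<forall>e\<in>S. \<omega> e = \<omega>' e) \<longrightarrow> h \<omega> = h \<omega>')"

definition is_local :: "(('d::finite) site \<Rightarrow> 'd env \<Rightarrow> real) \<Rightarrow> bool" where
  "is_local g \<longleftrightarrow> (\<exists>S. finite S \<and> S \<subseteq> lattice_edges \<and> determines S (g 0))"

definition supp :: "(('d::finite) site \<Rightarrow> 'd env \<Rightarrow> real) \<Rightarrow> 'd site set set" where
  "supp g = \<Inter> {S. finite S \<and> S \<subseteq> lattice_edges \<and> determines S (g 0)}"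

text \<open>#supp(g): number of sites contained in supp(g).\<close>
definition supp_sites :: "(('d::finite) site \<Rightarrow> 'd env \<Rightarrow> real) \<Rightarrow> nat" where
  "supp_sites g = card (\<Union> (supp g))"

definition translation_invariant :: "(('d::finite) site \<Rightarrow> 'd env \<Rightarrow> real) \<Rightarrow> bool" where
  "translation_invariant g \<longleftrightarrow> (\<forall>x. \<forall>\<omega>\<in>Omega. g x \<omega> = g 0 (shift x \<omega>))"

end

theory Submission
  imports Defs "HOL-Probability.Probability"
begin

text \<open>Summation by parts writes \<open>P\<^sub>t(D\<^sub>i g)(0,\<omega>)\<close> as \<open>\<Sum>\<^sub>y a\<^sub>y g(y,\<omega>)\<close> with
  \<open>a\<^sub>y = p\<^sub>t(0,y - e\<^sub>i) - p\<^sub>t(0,y)\<close>, weights of total sum zero. Since \<open>g(y,\<cdot>)\<close> and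
  \<open>g(y',\<cdot>)\<close> are independent unless \<open>y' - y\<close> is one of at most \<open>#supp(g)\<^sup>2\<close> differences of
  sites in the support, the second moment of such a sum is at most
  \<open>2 #supp(g)\<^sup>2 \<bbbE>[g\<^sup>2] \<Sum>\<^sub>y a\<^sub>y\<^sup>2\<close>, and \<open>\<Sum>\<^sub>y a\<^sub>y\<^sup>2\<close> is bounded by the Dirichlet energy
  of the heat kernel because all conductances are at least 1.

  For the walk killed outside a box, the \<open>\<ell>\<^sup>2\<close> mass \<open>\<phi>\<close> of the heat kernel satisfies
  \<open>\<phi>' = -2E\<close>, and the Nash inequality gives \<open>E \<ge> c \<phi>\<^bsup>1+2/d\<^esup>\<close>; hence
  \<open>\<phi>(t) \<le> C t\<^bsup>-d/2\<^esup>\<close>. As the energy is non-increasing, \<open>t E(t) \<le> \<phi>(t/2)\<close>, so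
  \<open>E(t) \<le> C t\<^bsup>-d/2-1\<^esup>\<close> uniformly in the box. Fatou's lemma passes to the limit of large
  boxes, which defines the kernel of the walk.\<close>

section \<open>Finitely supported lattice sums\<close>

definition lsum :: "('a \<Rightarrow> real) \<Rightarrow> real" where "lsum f = infsum f UNIV"
definition fsupp :: "('a \<Rightarrow> real) \<Rightarrow> bool" where "fsupp f \<longleftrightarrow> finite {x. f x \<noteq> 0}"

lemma lsum_eq_sum:
  assumes "finite S" "\<And>x. x \<notin> S \<Longrightarrow> f x = 0"
  shows "lsum f = sum f S"
proof -
  have "infsum f UNIV = infsum f S" by (rule infsum_cong_neutral) (use assms in auto)
  thus ?thesis using assms by (simp add: lsum_def)
qed

lemma fsupp_lsum: "fsupp f \<Longrightarrow> lsum f = sum f {x. f x \<noteq> 0}"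
  by (rule lsum_eq_sum) (auto simp: fsupp_def)

lemma fsupp_mono: "fsupp f \<Longrightarrow> (\<And>x. f x = 0 \<Longrightarrow> g x = 0) \<Longrightarrow> fsupp g"
  unfolding fsupp_def by (erule finite_subset[rotated]) auto

lemma fsupp_zero[simp]: "fsupp (\<lambda>x. 0)"
  by (simp add: fsupp_def)

lemma fsupp_add: "fsupp f \<Longrightarrow> fsupp g \<Longrightarrow> fsupp (\<lambda>x. f x + g x)"
  unfolding fsupp_def by (rule finite_subset[of _ "{x. f x \<noteq> 0} \<union> {x. g x \<noteq> 0}"]) auto

lemma fsupp_diff: "fsupp f \<Longrightarrow> fsupp g \<Longrightarrow> fsupp (\<lambda>x. f x - g x)"
  unfolding fsupp_def by (rule finite_subset[of _ "{x. f x \<noteq> 0} \<union> {x. g x \<noteq> 0}"]) auto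

lemma fsupp_mult_left: "fsupp f \<Longrightarrow> fsupp (\<lambda>x. f x * g x)"
  by (erule fsupp_mono) simp

lemma fsupp_mult_right: "fsupp g \<Longrightarrow> fsupp (\<lambda>x. f x * g x)"
  by (erule fsupp_mono) simp

lemma fsupp_divide: "fsupp f \<Longrightarrow> fsupp (\<lambda>x. f x / c)"
  by (erule fsupp_mono) simp

lemma fsupp_sq: "fsupp f \<Longrightarrow> fsupp (\<lambda>x. (f x)\<^sup>2)"
  by (erule fsupp_mono) simp

lemma fsupp_shift:
  fixes f :: "'a::group_add \<Rightarrow> real"
  shows "fsupp f \<Longrightarrow> fsupp (\<lambda>x. f (x + a))"
  unfolding fsupp_def
proof -
  assume "finite {x. f x \<noteq> 0}"
  then have "finite ((\<lambda>x. x - a) ` {x. f x \<noteq> 0})" by simp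
  moreover have "{x. f (x + a) \<noteq> 0} \<subseteq> (\<lambda>x. x - a) ` {x. f x \<noteq> 0}"
    by (auto intro!: image_eqI[where x="_ + a"])
  ultimately show "finite {x. f (x + a) \<noteq> 0}" by (rule finite_subset[rotated])
qed

lemma fsupp_sum:
  "finite J \<Longrightarrow> (\<And>j. j \<in> J \<Longrightarrow> fsupp (f j)) \<Longrightarrow> fsupp (\<lambda>x. \<Sum>j\<in>J. f j x)"
  by (induction J rule: finite_induct) (auto intro: fsupp_add)

lemma lsum_add:
  assumes "fsupp f" "fsupp g"
  shows "lsum (\<lambda>x. f x + g x) = lsum f + lsum g"
proof -
  let ?S = "{x. f x \<noteq> 0} \<union> {x. g x \<noteq> 0}"
  have fin: "finite ?S" using assms by (auto simp: fsupp_def)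
  have "lsum (\<lambda>x. f x + g x) = sum (\<lambda>x. f x + g x) ?S" by (rule lsum_eq_sum[OF fin]) auto
  moreover have "lsum f = sum f ?S" by (rule lsum_eq_sum[OF fin]) auto
  moreover have "lsum g = sum g ?S" by (rule lsum_eq_sum[OF fin]) auto
  ultimately show ?thesis by (simp add: sum.distrib)
qed

lemma lsum_diff:
  assumes "fsupp f" "fsupp g"
  shows "lsum (\<lambda>x. f x - g x) = lsum f - lsum g"
proof -
  let ?S = "{x. f x \<noteq> 0} \<union> {x. g x \<noteq> 0}"
  have fin: "finite ?S" using assms by (auto simp: fsupp_def)
  have "lsum (\<lambda>x. f x - g x) = sum (\<lambda>x. f x - g x) ?S" by (rule lsum_eq_sum[OF fin]) auto
  moreover have "lsum f = sum f ?S" by (rule lsum_eq_sum[OF fin]) auto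
  moreover have "lsum g = sum g ?S" by (rule lsum_eq_sum[OF fin]) auto
  ultimately show ?thesis by (simp add: sum_subtractf)
qed

lemma lsum_mono:
  assumes "fsupp f" "fsupp g" "\<And>x. f x \<le> g x"
  shows "lsum f \<le> lsum g"
proof -
  let ?S = "{x. f x \<noteq> 0} \<union> {x. g x \<noteq> 0}"
  have fin: "finite ?S" using assms by (auto simp: fsupp_def)
  have "lsum f = sum f ?S" by (rule lsum_eq_sum[OF fin]) auto
  moreover have "lsum g = sum g ?S" by (rule lsum_eq_sum[OF fin]) auto
  ultimately show ?thesis using assms(3) by (simp add: sum_mono)
qed

lemma lsum_cmult:
  assumes "fsupp f"
  shows "lsum (\<lambda>x. c * f x) = c * lsum f"
proof -
  let ?S = "{x. f x \<noteq> 0}"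
  have fin: "finite ?S" using assms by (auto simp: fsupp_def)
  have "lsum (\<lambda>x. c * f x) = sum (\<lambda>x. c * f x) ?S" by (rule lsum_eq_sum[OF fin]) auto
  moreover have "lsum f = sum f ?S" by (rule lsum_eq_sum[OF fin]) auto
  ultimately show ?thesis by (simp add: sum_distrib_left)
qed

lemma lsum_divide:
  assumes "fsupp f"
  shows "lsum (\<lambda>x. f x / c) = lsum f / c"
  using lsum_cmult[OF assms, of "1/c"] by simp

lemma lsum_nonneg:
  assumes "fsupp f" "\<And>x. 0 \<le> f x"
  shows "0 \<le> lsum f"
  using lsum_mono[OF fsupp_zero assms(1)] assms(2) by (simp add: lsum_def)

lemma lsum_zero[simp]: "lsum (\<lambda>x. 0) = 0"
  by (simp add: lsum_def)

lemma lsum_shift: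
  fixes f :: "'a::group_add \<Rightarrow> real"
  shows "lsum (\<lambda>x. f (x + a)) = lsum f"
proof -
  have "bij_betw (\<lambda>x. x + a) UNIV UNIV"
    by (rule bij_betwI[where g="\<lambda>x. x - a"]) auto
  then show ?thesis unfolding lsum_def by (rule infsum_reindex_bij_betw)
qed

lemma lsum_sum:
  assumes "finite J" "\<And>j. j \<in> J \<Longrightarrow> fsupp (f j)"
  shows "lsum (\<lambda>x. \<Sum>j\<in>J. f j x) = (\<Sum>j\<in>J. lsum (f j))"
  using assms
proof (induction J rule: finite_induct)
  case empty then show ?case by simp
next
  case (insert a J)
  have "lsum (\<lambda>x. \<Sum>j\<in>insert a J. f j x) = lsum (\<lambda>x. f a x + (\<Sum>j\<in>J. f j x))"
    using insert by simp
  also have "\<dots> = lsum (f a) + lsum (\<lambda>x. \<Sum>j\<in>J. f j x)"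
    using insert by (intro lsum_add fsupp_sum) auto
  finally show ?case using insert by simp
qed

lemma lsum_ge_sum:
  assumes "fsupp f" "\<And>x. 0 \<le> f x" "finite T"
  shows "sum f T \<le> lsum f"
proof -
  let ?S = "{x. f x \<noteq> 0} \<union> T"
  have fin: "finite ?S" using assms by (auto simp: fsupp_def)
  have "lsum f = sum f ?S" by (rule lsum_eq_sum[OF fin]) auto
  moreover have "sum f T \<le> sum f ?S" by (rule sum_mono2[OF fin]) (use assms in auto)
  ultimately show ?thesis by simp
qed

section \<open>The Nash inequality on \<open>\<int>\<^sup>d\<close>\<close>

lemma square_add_le: "(a + b)\<^sup>2 \<le> 2 * a\<^sup>2 + 2 * (b::real)\<^sup>2"
proof -
  have "(a + b)\<^sup>2 = 2 * a\<^sup>2 + 2 * b\<^sup>2 - (a - b)\<^sup>2" by (simp add: power2_eq_square algebra_simps)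
  moreover have "0 \<le> (a - b)\<^sup>2" by simp
  ultimately show ?thesis by linarith
qed

definition axis_vec :: "'d::finite \<Rightarrow> int \<Rightarrow> 'd site" where
  "axis_vec k i = (\<chi> l. if l = k then i else 0)"

lemma axis_vec_add: "axis_vec k i + axis_vec k j = axis_vec k (i + j)"
  by (simp add: axis_vec_def vec_eq_iff)

lemma axis_vec_0[simp]: "axis_vec k 0 = 0"
  by (simp add: axis_vec_def vec_eq_iff)

lemma axis_vec_1: "axis_vec k 1 = unitv k"
  by (simp add: axis_vec_def unitv_def)

definition grad :: "'d::finite \<Rightarrow> ('d site \<Rightarrow> real) \<Rightarrow> 'd site \<Rightarrow> real" where
  "grad k w x = w (x + unitv k) - w x"

definition grad_sq_sum :: "('d::finite site \<Rightarrow> real) \<Rightarrow> real" where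
  "grad_sq_sum w = (\<Sum>k\<in>UNIV. lsum (\<lambda>x. (grad k w x)\<^sup>2))"

lemma fsupp_grad: "fsupp w \<Longrightarrow> fsupp (grad k w)"
  unfolding grad_def by (intro fsupp_diff fsupp_shift)

lemma grad_sq_sum_nonneg: "fsupp w \<Longrightarrow> 0 \<le> grad_sq_sum w"
  unfolding grad_sq_sum_def by (intro sum_nonneg lsum_nonneg fsupp_sq fsupp_grad) auto

lemma lsum_grad_sq_le_grad_sq_sum: "fsupp w \<Longrightarrow> lsum (\<lambda>x. (grad k w x)\<^sup>2) \<le> grad_sq_sum w"
  unfolding grad_sq_sum_def
  by (rule member_le_sum) (auto intro!: lsum_nonneg fsupp_sq fsupp_grad)

definition axis_avg :: "'d::finite \<Rightarrow> nat \<Rightarrow> ('d site \<Rightarrow> real) \<Rightarrow> 'd site \<Rightarrow> real" where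
  "axis_avg k R w x = (\<Sum>i<R. w (x + axis_vec k (int i))) / real R"

definition cube :: "'d::finite set \<Rightarrow> nat \<Rightarrow> 'd site set" where
  "cube K R = {j. \<forall>k. (k \<in> K \<longrightarrow> 0 \<le> j$k \<and> j$k < int R) \<and> (k \<notin> K \<longrightarrow> j$k = 0)}"

definition cube_avg :: "'d::finite set \<Rightarrow> nat \<Rightarrow> ('d site \<Rightarrow> real) \<Rightarrow> 'd site \<Rightarrow> real" where
  "cube_avg K R w x = (\<Sum>j\<in>cube K R. w (x + j)) / real R ^ card K"

lemma finite_cube: "finite (cube K R)"
proof -
  have "cube K R \<subseteq> vec_lambda ` (PiE UNIV (\<lambda>_. {0..int R}))"
  proof
    fix j assume j: "j \<in> cube K R"
    have h: "0 \<le> j$k \<and> j$k \<le> int R" for k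
      using j unfolding cube_def by (cases "k \<in> K") force+
    have "(\<lambda>k. j $ k) \<in> PiE UNIV (\<lambda>_. {0..int R})"
      using h by (auto simp: PiE_def extensional_def)
    then show "j \<in> vec_lambda ` (PiE UNIV (\<lambda>_. {0..int R}))"
      by (intro image_eqI[where x="\<lambda>k. j $ k"]) auto
  qed
  moreover have "finite (vec_lambda ` (PiE UNIV (\<lambda>_. {0..int R})) :: 'a site set)"
    by (intro finite_imageI finite_PiE) auto
  ultimately show ?thesis by (rule finite_subset)
qed

lemma cube_empty: "cube {} R = {0}"
  by (auto simp: cube_def vec_eq_iff)

lemma cube_avg_empty: "cube_avg {} R w = w"
  by (auto simp: cube_avg_def cube_empty)

lemma cube_insert:
  assumes "k \<notin> K"
  shows "cube (insert k K) R = (\<lambda>(i,j). j + axis_vec k (int i)) ` ({..<R} \<times> cube K R)"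
    and "inj_on (\<lambda>(i,j). j + axis_vec k (int i)) ({..<R} \<times> cube K R)"
proof -
  show "cube (insert k K) R = (\<lambda>(i,j). j + axis_vec k (int i)) ` ({..<R} \<times> cube K R)"
  proof
    show "cube (insert k K) R \<subseteq> (\<lambda>(i,j). j + axis_vec k (int i)) ` ({..<R} \<times> cube K R)"
    proof
      fix j assume j: "j \<in> cube (insert k K) R"
      define j' where "j' = (\<chi> l. if l = k then 0 else j $ l)"
      have "j' \<in> cube K R" using j assms unfolding cube_def j'_def by auto
      moreover have "nat (j $ k) < R" using j unfolding cube_def by auto
      moreover have "j = j' + axis_vec k (int (nat (j $ k)))"
        using j unfolding cube_def j'_def axis_vec_def by (auto simp: vec_eq_iff)
      ultimately show "j \<in> (\<lambda>(i,j). j + axis_vec k (int i)) ` ({..<R} \<times> cube K R)"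
        by (intro image_eqI[where x="(nat (j $ k), j')"]) auto
    qed
    show "(\<lambda>(i,j). j + axis_vec k (int i)) ` ({..<R} \<times> cube K R) \<subseteq> cube (insert k K) R"
      using assms by (auto simp: cube_def axis_vec_def)
  qed
  show "inj_on (\<lambda>(i,j). j + axis_vec k (int i)) ({..<R} \<times> cube K R)"
  proof (rule inj_onI, clarsimp)
    fix i j i' j'
    assume h: "j \<in> cube K R" "j' \<in> cube K R" "j + axis_vec k (int i) = j' + axis_vec k (int i')"
    have "(j + axis_vec k (int i)) $ k = (j' + axis_vec k (int i')) $ k" using h by simp
    then have "i = i'" using h assms by (simp add: cube_def axis_vec_def)
    moreover have "j = j'"
    proof (subst vec_eq_iff, rule allI)
      fix l
      have "(j + axis_vec k (int i)) $ l = (j' + axis_vec k (int i')) $ l" using h by simp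
      then show "j $ l = j' $ l" using h assms \<open>i = i'\<close> by (simp add: axis_vec_def)
    qed
    ultimately show "i = i' \<and> j = j'" by simp
  qed
qed

lemma cube_avg_insert:
  assumes "k \<notin> K"
  shows "cube_avg (insert k K) R w x = axis_avg k R (cube_avg K R w) x"
proof -
  have fin: "finite K" by simp
  have "(\<Sum>j\<in>cube (insert k K) R. w (x + j))
      = (\<Sum>(i,j)\<in>{..<R} \<times> cube K R. w (x + (j + axis_vec k (int i))))"
    by (subst cube_insert(1)[OF assms], subst sum.reindex[OF cube_insert(2)[OF assms]])
       (simp add: case_prod_unfold)
  also have "\<dots> = (\<Sum>i<R. \<Sum>j\<in>cube K R. w (x + axis_vec k (int i) + j))"
    by (subst sum.cartesian_product[symmetric]) (simp add: add_ac)
  finally have eq: "(\<Sum>j\<in>cube (insert k K) R. w (x + j)) = (\<Sum>i<R. \<Sum>j\<in>cube K R. w (x + axis_vec k (int i) + j))" .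
  have c: "card (insert k K) = Suc (card K)" using fin assms by simp
  have d: "a / real R ^ Suc c = (a / real R ^ c) / real R" for a c
    by (simp add: divide_divide_eq_left mult.commute)
  show ?thesis
    unfolding cube_avg_def axis_avg_def
    by (simp only: eq c d sum_divide_distrib[symmetric])
qed

lemma fsupp_axis_avg: "fsupp w \<Longrightarrow> fsupp (axis_avg k R w)"
  unfolding axis_avg_def[abs_def] by (intro fsupp_divide fsupp_sum fsupp_shift) auto

lemma fsupp_cube_avg: "fsupp w \<Longrightarrow> fsupp (cube_avg K R w)"
  unfolding cube_avg_def[abs_def] by (intro fsupp_divide fsupp_sum fsupp_shift finite_cube)

lemma lsum_axis_avg:
  assumes "fsupp w" "R > 0"
  shows "lsum (axis_avg k R w) = lsum w"
proof -
  have "lsum (axis_avg k R w) = lsum (\<lambda>x. \<Sum>i<R. w (x + axis_vec k (int i))) / real R"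
    unfolding axis_avg_def by (rule lsum_divide) (intro fsupp_sum fsupp_shift assms, auto)
  also have "lsum (\<lambda>x. \<Sum>i<R. w (x + axis_vec k (int i))) = (\<Sum>i<R. lsum (\<lambda>x. w (x + axis_vec k (int i))))"
    by (rule lsum_sum) (auto intro: fsupp_shift assms)
  also have "\<dots> = real R * lsum w" by (simp add: lsum_shift)
  finally show ?thesis using assms by simp
qed

lemma square_mean_le_mean_square:
  fixes a :: "nat \<Rightarrow> real"
  assumes "R > 0"
  shows "((\<Sum>i<R. a i) / real R)\<^sup>2 \<le> (\<Sum>i<R. (a i)\<^sup>2) / real R"
proof -
  have "(\<Sum>i<R. a i)\<^sup>2 \<le> (\<Sum>i<R. (a i)\<^sup>2) * real R"
    using sum_squared_le_sum_of_squares[of a "{..<R}"] by simp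
  then show ?thesis using assms by (simp add: power_divide field_simps power2_eq_square)
qed

lemma axis_avg_l2_contract:
  assumes "fsupp w" "R > 0"
  shows "lsum (\<lambda>x. (axis_avg k R w x)\<^sup>2) \<le> lsum (\<lambda>x. (w x)\<^sup>2)"
proof -
  have "lsum (\<lambda>x. (axis_avg k R w x)\<^sup>2) \<le> lsum (\<lambda>x. (\<Sum>i<R. (w (x + axis_vec k (int i)))\<^sup>2) / real R)"
  proof (rule lsum_mono)
    show "fsupp (\<lambda>x. (axis_avg k R w x)\<^sup>2)" by (intro fsupp_sq fsupp_axis_avg assms)
    show "fsupp (\<lambda>x. (\<Sum>i<R. (w (x + axis_vec k (int i)))\<^sup>2) / real R)"
      by (intro fsupp_divide fsupp_sum fsupp_sq fsupp_shift assms) simp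
    show "(axis_avg k R w x)\<^sup>2 \<le> (\<Sum>i<R. (w (x + axis_vec k (int i)))\<^sup>2) / real R" for x
      unfolding axis_avg_def by (rule square_mean_le_mean_square[OF assms(2)])
  qed
  also have "\<dots> = (\<Sum>i<R. lsum (\<lambda>x. (w (x + axis_vec k (int i)))\<^sup>2)) / real R"
  proof -
    have f: "\<And>i. fsupp (\<lambda>x. (w (x + axis_vec k (int i)))\<^sup>2)" by (intro fsupp_sq fsupp_shift assms)
    show ?thesis by (subst lsum_divide, rule fsupp_sum, simp, rule f, subst lsum_sum, simp, rule f, rule refl)
  qed
  also have "\<dots> = lsum (\<lambda>x. (w x)\<^sup>2)"
    using assms lsum_shift[of "\<lambda>x. (w x)\<^sup>2"] by simp
  finally show ?thesis .
qed

lemma grad_axis_avg: "grad j (axis_avg k R w) = axis_avg k R (grad j w)"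
  unfolding grad_def axis_avg_def
  by (rule ext) (simp add: sum_subtractf diff_divide_distrib add_ac)

lemma axis_telescope:
  "w (x + axis_vec k (int j)) - w x = (\<Sum>i<j. grad k w (x + axis_vec k (int i)))"
proof (induction j)
  case 0 then show ?case by simp
next
  case (Suc j)
  have i: "int (Suc j) = int j + 1" by simp
  have e: "x + axis_vec k (int (Suc j)) = x + axis_vec k (int j) + unitv k"
    by (simp only: i axis_vec_1[symmetric] add.assoc axis_vec_add)
  have "w (x + axis_vec k (int (Suc j))) - w x = (w (x + axis_vec k (int j)) - w x) + grad k w (x + axis_vec k (int j))"
    unfolding grad_def e by simp
  then show ?case using Suc by simp
qed

lemma axis_avg_poincare:
  assumes "fsupp w" "R > 0"
  shows "lsum (\<lambda>x. (w x - axis_avg k R w x)\<^sup>2) \<le> (real R)\<^sup>2 * lsum (\<lambda>x. (grad k w x)\<^sup>2)"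
proof -
  define g where "g x = (\<Sum>i<R. (grad k w (x + axis_vec k (int i)))\<^sup>2)" for x
  have g0: "0 \<le> g x" for x unfolding g_def by (simp add: sum_nonneg)
  have step: "(w x - w (x + axis_vec k (int j)))\<^sup>2 \<le> real R * g x" if "j < R" for x j
  proof -
    have "(w x - w (x + axis_vec k (int j)))\<^sup>2 = (\<Sum>i<j. grad k w (x + axis_vec k (int i)))\<^sup>2"
      using axis_telescope[of w x k j] by (metis power2_commute)
    also have "\<dots> \<le> (\<Sum>i<j. (grad k w (x + axis_vec k (int i)))\<^sup>2) * real j"
      using sum_squared_le_sum_of_squares[of _ "{..<j}"] by simp
    also have "\<dots> \<le> g x * real R"
      unfolding g_def using that
      by (intro mult_mono sum_mono2) (auto simp: sum_nonneg)
    finally show ?thesis by (simp add: mult.commute)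
  qed
  have pt: "(w x - axis_avg k R w x)\<^sup>2 \<le> real R * g x" for x
  proof -
    have "w x - axis_avg k R w x = (\<Sum>j<R. w x - w (x + axis_vec k (int j))) / real R"
      using assms by (simp add: axis_avg_def sum_subtractf field_simps)
    then have "(w x - axis_avg k R w x)\<^sup>2 \<le> (\<Sum>j<R. (w x - w (x + axis_vec k (int j)))\<^sup>2) / real R"
      using square_mean_le_mean_square[OF assms(2)] by simp
    also have "\<dots> \<le> (\<Sum>j<R. real R * g x) / real R"
      by (intro divide_right_mono sum_mono step) auto
    also have "\<dots> = real R * g x" using assms by simp
    finally show ?thesis .
  qed
  have fg: "fsupp g" unfolding g_def[abs_def]
    by (intro fsupp_sum fsupp_sq fsupp_shift fsupp_grad assms) auto
  have "lsum (\<lambda>x. (w x - axis_avg k R w x)\<^sup>2) \<le> lsum (\<lambda>x. real R * g x)"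
    by (rule lsum_mono) (auto intro!: fsupp_sq fsupp_diff fsupp_axis_avg assms fsupp_mult_right fg pt)
  also have "\<dots> = real R * (\<Sum>i<R. lsum (\<lambda>x. (grad k w (x + axis_vec k (int i)))\<^sup>2))"
  proof -
    have f: "\<And>i. fsupp (\<lambda>x. (grad k w (x + axis_vec k (int i)))\<^sup>2)"
      by (intro fsupp_sq fsupp_shift fsupp_grad assms)
    show ?thesis unfolding lsum_cmult[OF fg] unfolding g_def
      by (subst lsum_sum, simp, rule f, rule refl)
  qed
  also have "\<dots> = (real R)\<^sup>2 * lsum (\<lambda>x. (grad k w x)\<^sup>2)"
    using lsum_shift[of "\<lambda>x. (grad k w x)\<^sup>2"] by (simp add: power2_eq_square)
  finally show ?thesis .
qed

lemma lsum_grad_cube_avg_le: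
  assumes "fsupp w" "R > 0"
  shows "lsum (\<lambda>x. (grad j (cube_avg K R w) x)\<^sup>2) \<le> lsum (\<lambda>x. (grad j w x)\<^sup>2)"
proof -
  have "finite K" by simp
  then show ?thesis
  proof (induction K rule: finite_induct)
    case empty then show ?case by (simp add: cube_avg_empty)
  next
    case (insert k K)
    have "cube_avg (insert k K) R w = axis_avg k R (cube_avg K R w)"
      by (rule ext, rule cube_avg_insert) (use insert in simp)
    then have "lsum (\<lambda>x. (grad j (cube_avg (insert k K) R w) x)\<^sup>2)
        = lsum (\<lambda>x. (axis_avg k R (grad j (cube_avg K R w)) x)\<^sup>2)"
      by (simp add: grad_axis_avg)
    also have "\<dots> \<le> lsum (\<lambda>x. (grad j (cube_avg K R w) x)\<^sup>2)"
      by (rule axis_avg_l2_contract[OF fsupp_grad[OF fsupp_cube_avg[OF assms(1)]] assms(2)])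
    finally show ?case using insert.IH by simp
  qed
qed

lemma cube_avg_poincare:
  assumes fw: "fsupp w" and R: "R > 0"
  shows "lsum (\<lambda>x. (w x - cube_avg K R w x)\<^sup>2) \<le> 4 ^ card K * (real R)\<^sup>2 * grad_sq_sum w"
proof -
  have "finite K" by simp
  then show ?thesis
  proof (induction K rule: finite_induct)
    case empty then show ?case using grad_sq_sum_nonneg[OF fw] by (simp add: cube_avg_empty)
  next
    case (insert k K)
    define W where "W = cube_avg K R w"
    have fW: "fsupp W" unfolding W_def by (rule fsupp_cube_avg[OF fw])
    have A: "cube_avg (insert k K) R w = axis_avg k R W"
      unfolding W_def by (rule ext, rule cube_avg_insert) (use insert in simp)
    have fd: "fsupp (\<lambda>x. (w x - W x)\<^sup>2)" "fsupp (\<lambda>x. (W x - axis_avg k R W x)\<^sup>2)"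
      by (intro fsupp_sq fsupp_diff fw fW fsupp_axis_avg)+
    have "lsum (\<lambda>x. (w x - axis_avg k R W x)\<^sup>2)
        \<le> lsum (\<lambda>x. 2 * (w x - W x)\<^sup>2 + 2 * (W x - axis_avg k R W x)\<^sup>2)"
    proof (rule lsum_mono)
      show "fsupp (\<lambda>x. (w x - axis_avg k R W x)\<^sup>2)" by (intro fsupp_sq fsupp_diff fw fsupp_axis_avg fW)
      show "fsupp (\<lambda>x. 2 * (w x - W x)\<^sup>2 + 2 * (W x - axis_avg k R W x)\<^sup>2)"
        by (intro fsupp_add fsupp_mult_right fd)
      show "(w x - axis_avg k R W x)\<^sup>2 \<le> 2 * (w x - W x)\<^sup>2 + 2 * (W x - axis_avg k R W x)\<^sup>2" for x
        using square_add_le[of "w x - W x" "W x - axis_avg k R W x"] by simp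
    qed
    also have "\<dots> = 2 * lsum (\<lambda>x. (w x - W x)\<^sup>2) + 2 * lsum (\<lambda>x. (W x - axis_avg k R W x)\<^sup>2)"
      by (subst lsum_add, (intro fsupp_mult_right fd)+, subst lsum_cmult, (rule fd)+,
          subst lsum_cmult, (rule fd)+) simp
    also have "lsum (\<lambda>x. (W x - axis_avg k R W x)\<^sup>2) \<le> (real R)\<^sup>2 * grad_sq_sum w"
    proof -
      have "lsum (\<lambda>x. (W x - axis_avg k R W x)\<^sup>2) \<le> (real R)\<^sup>2 * lsum (\<lambda>x. (grad k W x)\<^sup>2)"
        by (rule axis_avg_poincare[OF fW R])
      also have "\<dots> \<le> (real R)\<^sup>2 * grad_sq_sum w"
        using lsum_grad_cube_avg_le[OF fw R, of k K] lsum_grad_sq_le_grad_sq_sum[OF fw, of k]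
        unfolding W_def by (intro mult_left_mono) auto
      finally show ?thesis .
    qed
    also have "2 * lsum (\<lambda>x. (w x - W x)\<^sup>2) + 2 * ((real R)\<^sup>2 * grad_sq_sum w)
        \<le> 4 ^ card (insert k K) * (real R)\<^sup>2 * grad_sq_sum w"
    proof -
      have "(2 * 4 ^ card K + 2) * ((real R)\<^sup>2 * grad_sq_sum w) \<le> 4 ^ Suc (card K) * ((real R)\<^sup>2 * grad_sq_sum w)"
        using grad_sq_sum_nonneg[OF fw] by (intro mult_right_mono) auto
      then show ?thesis using insert W_def by (simp add: algebra_simps)
    qed
    finally show ?case by (simp add: A)
  qed
qed

lemma cube_avg_bounds:
  assumes "fsupp w" "\<And>x. 0 \<le> w x" "R > 0"
  shows "0 \<le> cube_avg K R w x" "cube_avg K R w x \<le> lsum w / real R ^ card K"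
proof -
  show "0 \<le> cube_avg K R w x" unfolding cube_avg_def using assms by (simp add: sum_nonneg)
  have "(\<Sum>j\<in>cube K R. w (x + j)) = sum w ((\<lambda>j. x + j) ` cube K R)"
    by (subst sum.reindex) (auto simp: inj_on_def)
  also have "\<dots> \<le> lsum w" by (rule lsum_ge_sum) (use assms finite_cube in auto)
  finally show "cube_avg K R w x \<le> lsum w / real R ^ card K"
    unfolding cube_avg_def using assms by (simp add: divide_right_mono)
qed

lemma lsum_cube_avg:
  assumes "fsupp w" "R > 0"
  shows "lsum (cube_avg K R w) = lsum w"
proof -
  have "finite K" by simp
  then show ?thesis
  proof (induction K rule: finite_induct)
    case empty then show ?case by (simp add: cube_avg_empty)
  next
    case (insert k K)
    have "cube_avg (insert k K) R w = axis_avg k R (cube_avg K R w)"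
      by (rule ext, rule cube_avg_insert) (use insert in simp)
    then show ?case using insert lsum_axis_avg[OF fsupp_cube_avg[OF assms(1)] assms(2)] by simp
  qed
qed

theorem nash_inequality:
  fixes w :: "'d::finite site \<Rightarrow> real"
  assumes "fsupp w" "\<And>x. 0 \<le> w x" "R > 0"
  shows "lsum (\<lambda>x. (w x)\<^sup>2) \<le> 2 * 4 ^ CARD('d) * (real R)\<^sup>2 * grad_sq_sum w + 2 * (lsum w)\<^sup>2 / real R ^ CARD('d)"
proof -
  define A where "A = cube_avg (UNIV::'d set) R w"
  have fA: "fsupp A" unfolding A_def by (rule fsupp_cube_avg[OF assms(1)])
  have b0: "0 \<le> A x" and b1: "A x \<le> lsum w / real R ^ CARD('d)" for x
    unfolding A_def using cube_avg_bounds[OF assms] by auto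
  have "lsum (\<lambda>x. (w x)\<^sup>2) \<le> lsum (\<lambda>x. 2 * (w x - A x)\<^sup>2 + 2 * (A x)\<^sup>2)"
  proof (rule lsum_mono)
    show "fsupp (\<lambda>x. (w x)\<^sup>2)" by (intro fsupp_sq assms)
    show "fsupp (\<lambda>x. 2 * (w x - A x)\<^sup>2 + 2 * (A x)\<^sup>2)"
      by (intro fsupp_add fsupp_mult_right fsupp_sq fsupp_diff assms fA)
    fix x
    from square_add_le[of "w x - A x" "A x"] show "(w x)\<^sup>2 \<le> 2 * (w x - A x)\<^sup>2 + 2 * (A x)\<^sup>2" by simp
  qed
  also have "\<dots> = 2 * lsum (\<lambda>x. (w x - A x)\<^sup>2) + 2 * lsum (\<lambda>x. (A x)\<^sup>2)"
    by (subst lsum_add, (intro fsupp_mult_right fsupp_sq fsupp_diff assms fA)+,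
        subst lsum_cmult, (intro fsupp_sq fsupp_diff assms fA)+,
        subst lsum_cmult, (intro fsupp_sq fsupp_diff assms fA)+) simp
  also have "lsum (\<lambda>x. (w x - A x)\<^sup>2) \<le> 4 ^ CARD('d) * (real R)\<^sup>2 * grad_sq_sum w"
    using cube_avg_poincare[OF assms(1) assms(3), of UNIV] unfolding A_def by simp
  also have "lsum (\<lambda>x. (A x)\<^sup>2) \<le> lsum (\<lambda>x. (lsum w / real R ^ CARD('d)) * A x)"
  proof (rule lsum_mono)
    show "fsupp (\<lambda>x. (A x)\<^sup>2)" by (rule fsupp_sq[OF fA])
    show "fsupp (\<lambda>x. (lsum w / real R ^ CARD('d)) * A x)" by (rule fsupp_mult_right[OF fA])
    show "(A x)\<^sup>2 \<le> (lsum w / real R ^ CARD('d)) * A x" for x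
      unfolding power2_eq_square by (rule mult_right_mono[OF b1 b0])
  qed
  also have "\<dots> = (lsum w)\<^sup>2 / real R ^ CARD('d)"
    using lsum_cmult[OF fA, of "lsum w / real R ^ CARD('d)"] lsum_cube_avg[OF assms(1) assms(3)] unfolding A_def
    by (simp add: power2_eq_square)
  finally show ?thesis by simp
qed

section \<open>The generator of the walk\<close>

lemma unitv_nth: "unitv j $ k = (if k = j then 1 else 0)"
  by (simp add: unitv_def)

lemma unitv_inj: "inj unitv"
proof (rule injI)
  fix a b :: "'d::finite" assume "unitv a = unitv b"
  then have "unitv a $ a = unitv b $ a" by simp
  then show "a = b" by (simp add: unitv_nth split: if_splits)
qed

lemma unitv_neq_neg: "unitv j \<noteq> - unitv k"
proof
  assume "unitv j = - unitv k"
  then have "unitv j $ j = (- unitv k) $ j" by simp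
  then show False by (simp add: unitv_nth split: if_splits)
qed

lemma unitv_neq0: "unitv j \<noteq> 0"
proof
  assume "unitv j = 0"
  then have "unitv j $ j = 0 $ j" by simp
  then show False by (simp add: unitv_nth)
qed

lemma finite_units: "finite (units :: ('d::finite) site set)"
  by (simp add: units_def)

lemma zero_notin_units: "(0::('d::finite) site) \<notin> units"
proof
  assume "(0::'d site) \<in> units"
  then obtain k :: 'd where "0 = unitv k \<or> 0 = - unitv k" by (auto simp: units_def)
  then show False using unitv_neq0[of k] by auto
qed

lemma uminus_units: "v \<in> units \<Longrightarrow> - v \<in> units"
  by (auto simp: units_def)

lemma sum_units:
  fixes f :: "('d::finite) site \<Rightarrow> real"
  shows "(\<Sum>v\<in>units. f v) = (\<Sum>k\<in>UNIV. f (unitv k)) + (\<Sum>k\<in>UNIV. f (- unitv k))"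
proof -
  have d: "range unitv \<inter> uminus ` range unitv = ({} :: 'd site set)"
    using unitv_neq_neg by auto
  have "(\<Sum>v\<in>units. f v) = (\<Sum>v\<in>range unitv. f v) + (\<Sum>v\<in>uminus ` range unitv. f v)"
    unfolding units_def by (rule sum.union_disjoint) (use d in auto)
  also have "(\<Sum>v\<in>range unitv. f v) = (\<Sum>k\<in>UNIV. f (unitv k))"
    by (rule sum.reindex[OF unitv_inj, unfolded comp_def])
  also have "(\<Sum>v\<in>uminus ` range unitv. f v) = (\<Sum>k\<in>UNIV. f (- unitv k))"
  proof -
    have "inj (\<lambda>k. - unitv k :: 'd site)" using unitv_inj by (auto simp: inj_def)
    then have "(\<Sum>v\<in>(\<lambda>k. - unitv k) ` UNIV. f v) = (\<Sum>k\<in>UNIV. f (- unitv k))"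
      by (rule sum.reindex[unfolded comp_def])
    moreover have "uminus ` range unitv = (\<lambda>k. - unitv k :: 'd site) ` UNIV" by auto
    ultimately show ?thesis by simp
  qed
  finally show ?thesis .
qed

lemma unitv_edge: "{x, x + unitv k} \<in> lattice_edges"
  by (auto simp: lattice_edges_def)

lemma units_edge: "v \<in> units \<Longrightarrow> {x, x + v} \<in> lattice_edges"
proof (auto simp: units_def)
  fix k show "{x, x + unitv k} \<in> lattice_edges" by (rule unitv_edge)
next
  fix k
  have "{x - unitv k, x - unitv k + unitv k} \<in> lattice_edges" by (rule unitv_edge)
  then show "{x, x - unitv k} \<in> lattice_edges" by (simp add: insert_commute)
qed

lemma rate_nonneg:
  assumes "\<forall>e\<in>lattice_edges. 0 \<le> m e"
  shows "0 \<le> rate m x z"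
proof (cases "z - x \<in> units")
  case True
  then have "{x, x + (z - x)} \<in> lattice_edges" by (rule units_edge)
  then show ?thesis using assms True by (simp add: rate_def)
qed (simp add: rate_def)

lemma rate_sym: "rate m x z = rate m z x"
proof -
  have "z - x \<in> units \<longleftrightarrow> x - z \<in> units"
    using uminus_units[of "z - x"] uminus_units[of "x - z"] by auto
  then show ?thesis by (simp add: rate_def insert_commute)
qed

lemma gen_sym: "gen m x z = gen m z x"
  by (simp add: gen_def rate_sym)

lemma conductances_nonneg:
  fixes m :: "('d::finite) env"
  shows "\<forall>e\<in>lattice_edges. 1 \<le> m e \<Longrightarrow> \<forall>e\<in>lattice_edges. 0 \<le> m e"
  by (auto intro: order_trans[OF zero_le_one])

lemma rate_units: "v \<in> units \<Longrightarrow> rate m x (x + v) = m {x, x + v}"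
  by (simp add: rate_def)

section \<open>Matrix exponentials on finite sets of sites\<close>

fun mpow :: "('d::finite) site set \<Rightarrow> ('d site \<Rightarrow> 'd site \<Rightarrow> real) \<Rightarrow> nat \<Rightarrow> 'd site \<Rightarrow> 'd site \<Rightarrow> real" where
  "mpow B A 0 x y = (if x = y \<and> x \<in> B then 1 else 0)"
| "mpow B A (Suc n) x y = (if x \<in> B then (\<Sum>z\<in>B. A x z * mpow B A n z y) else 0)"

definition mexp :: "('d::finite) site set \<Rightarrow> ('d site \<Rightarrow> 'd site \<Rightarrow> real) \<Rightarrow> real \<Rightarrow> 'd site \<Rightarrow> 'd site \<Rightarrow> real" where
  "mexp B A t x y = (\<Sum>n. t ^ n / fact n * mpow B A n x y)"

lemma qpow_eq_mpow: "qpow B m n x y = mpow B (gen m) n x y"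
  by (induction n arbitrary: x y) auto

lemma killed_kernel_eq_mexp: "killed_kernel N m t x y = mexp (box N) (gen m) t x y"
  by (simp add: killed_kernel_def mexp_def qpow_eq_mpow)

lemma mpow_outside1: "x \<notin> B \<Longrightarrow> mpow B A n x y = 0"
  by (cases n) auto

lemma mpow_outside2: "y \<notin> B \<Longrightarrow> mpow B A n x y = 0"
  by (induction n arbitrary: x) auto

lemma mexp_outside1: "x \<notin> B \<Longrightarrow> mexp B A t x y = 0"
  by (simp add: mexp_def mpow_outside1)

lemma mexp_outside2: "y \<notin> B \<Longrightarrow> mexp B A t x y = 0"
  by (simp add: mexp_def mpow_outside2)

definition abs_entry_sum :: "('d::finite) site set \<Rightarrow> ('d site \<Rightarrow> 'd site \<Rightarrow> real) \<Rightarrow> real" where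
  "abs_entry_sum B A = (\<Sum>x\<in>B. \<Sum>z\<in>B. \<bar>A x z\<bar>) + 1"

lemma abs_entry_sum_ge_1: "1 \<le> abs_entry_sum B A"
  unfolding abs_entry_sum_def by (simp add: sum_nonneg)

lemma mpow_bound:
  assumes "finite B"
  shows "\<bar>mpow B A n x y\<bar> \<le> abs_entry_sum B A ^ n"
proof (induction n arbitrary: x)
  case 0 then show ?case by simp
next
  case (Suc n)
  show ?case
  proof (cases "x \<in> B")
    case True
    have "\<bar>mpow B A (Suc n) x y\<bar> \<le> (\<Sum>z\<in>B. \<bar>A x z\<bar> * \<bar>mpow B A n z y\<bar>)"
      using True by (simp add: sum_abs[THEN order_trans] abs_mult)
    also have "\<dots> \<le> (\<Sum>z\<in>B. \<bar>A x z\<bar> * abs_entry_sum B A ^ n)"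
      by (intro sum_mono mult_left_mono Suc) auto
    also have "\<dots> = (\<Sum>z\<in>B. \<bar>A x z\<bar>) * abs_entry_sum B A ^ n" by (simp add: sum_distrib_right)
    also have "\<dots> \<le> abs_entry_sum B A * abs_entry_sum B A ^ n"
    proof (rule mult_right_mono)
      have "(\<Sum>z\<in>B. \<bar>A x z\<bar>) \<le> (\<Sum>x\<in>B. \<Sum>z\<in>B. \<bar>A x z\<bar>)"
        using True assms by (intro member_le_sum) (auto simp: sum_nonneg)
      then show "(\<Sum>z\<in>B. \<bar>A x z\<bar>) \<le> abs_entry_sum B A" unfolding abs_entry_sum_def by simp
    qed (use abs_entry_sum_ge_1[of B A] in simp)
    finally show ?thesis by simp
  qed (simp, intro mult_nonneg_nonneg zero_le_power; use abs_entry_sum_ge_1[of B A] in linarith)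
qed

lemma summable_mpow_terms:
  assumes "finite B"
  shows "summable (\<lambda>n. mpow B A n x y / fact n * t ^ n)"
proof (rule summable_comparison_test'[where g="\<lambda>n. inverse (fact n) * (abs_entry_sum B A * \<bar>t\<bar>) ^ n"])
  show "summable (\<lambda>n. inverse (fact n) * (abs_entry_sum B A * \<bar>t\<bar>) ^ n)" by (rule summable_exp)
  fix n :: nat
  have "norm (mpow B A n x y / fact n * t ^ n) = \<bar>mpow B A n x y\<bar> * \<bar>t\<bar> ^ n / fact n"
    by (simp add: abs_mult power_abs)
  also have "\<dots> \<le> abs_entry_sum B A ^ n * \<bar>t\<bar> ^ n / fact n"
    by (intro divide_right_mono mult_right_mono mpow_bound assms) auto
  finally show "norm (mpow B A n x y / fact n * t ^ n) \<le> inverse (fact n) * (abs_entry_sum B A * \<bar>t\<bar>) ^ n"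
    by (simp add: power_mult_distrib field_simps)
qed

lemma mexp_eq_suminf: "mexp B A t x y = (\<Sum>n. mpow B A n x y / fact n * t ^ n)"
  unfolding mexp_def by (rule suminf_cong) simp

lemma mexp_0: "mexp B A 0 x y = mpow B A 0 x y"
  unfolding mexp_eq_suminf by (subst powser_zero) simp

lemma mexp_deriv:
  assumes fin: "finite B" and x: "x \<in> B"
  shows "((\<lambda>t. mexp B A t x y) has_real_derivative (\<Sum>z\<in>B. A x z * mexp B A t z y)) (at t)"
proof -
  define c where "c n = mpow B A n x y / fact n" for n
  have sc: "\<And>s. summable (\<lambda>n. c n * s ^ n)" unfolding c_def by (rule summable_mpow_terms[OF fin])
  have D: "((\<lambda>t. \<Sum>n. c n * t ^ n) has_field_derivative (\<Sum>n. diffs c n * t ^ n)) (at t)"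
    by (rule termdiffs_strong_converges_everywhere[OF sc])
  have dc: "diffs c n * t ^ n = (\<Sum>z\<in>B. A x z * (mpow B A n z y / fact n * t ^ n))" for n
  proof -
    have "diffs c n = mpow B A (Suc n) x y / fact n"
      unfolding diffs_def c_def by (simp add: fact_Suc field_simps del: of_nat_Suc)
    then show ?thesis using x by (simp add: sum_distrib_left sum_distrib_right sum_divide_distrib mult_ac)
  qed
  have "(\<Sum>n. diffs c n * t ^ n) = (\<Sum>n. \<Sum>z\<in>B. A x z * (mpow B A n z y / fact n * t ^ n))"
    by (simp add: dc)
  also have "\<dots> = (\<Sum>z\<in>B. \<Sum>n. A x z * (mpow B A n z y / fact n * t ^ n))"
    by (rule suminf_sum, rule summable_mult, rule summable_mpow_terms[OF fin])
  also have "\<dots> = (\<Sum>z\<in>B. A x z * mexp B A t z y)"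
  proof (rule sum.cong[OF refl])
    fix z
    show "(\<Sum>n. A x z * (mpow B A n z y / fact n * t ^ n)) = A x z * mexp B A t z y"
      unfolding mexp_eq_suminf by (rule suminf_mult, rule summable_mpow_terms[OF fin])
  qed
  finally have "(\<Sum>n. diffs c n * t ^ n) = (\<Sum>z\<in>B. A x z * mexp B A t z y)" .
  moreover have "(\<lambda>t. \<Sum>n. c n * t ^ n) = (\<lambda>t. mexp B A t x y)"
    by (rule ext) (simp add: mexp_eq_suminf c_def)
  ultimately show ?thesis using D by simp
qed

lemma mpow_Suc_right:
  assumes fin: "finite B"
  shows "mpow B A (Suc n) x y = (if y \<in> B then (\<Sum>z\<in>B. mpow B A n x z * A z y) else 0)"
proof (induction n arbitrary: x)
  case 0
  have l: "(\<Sum>z\<in>B. A x z * (if z = y \<and> z \<in> B then 1 else 0)) = (if y \<in> B then A x y else 0)"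
  proof -
    have "(\<Sum>z\<in>B. A x z * (if z = y \<and> z \<in> B then 1 else 0)) = (\<Sum>z\<in>B. if z = y then A x z else 0)"
      by (rule sum.cong) auto
    then show ?thesis using fin by (simp add: sum.delta)
  qed
  have r: "(\<Sum>z\<in>B. (if x = z \<and> x \<in> B then 1 else 0) * A z y) = (if x \<in> B then A x y else 0)"
  proof -
    have "(\<Sum>z\<in>B. (if x = z \<and> x \<in> B then 1 else 0) * A z y) = (\<Sum>z\<in>B. if z = x then A z y else 0)"
      by (rule sum.cong) auto
    then show ?thesis using fin by (simp add: sum.delta)
  qed
  show ?case by (simp only: mpow.simps l r) auto
next
  case (Suc n)
  show ?case
  proof (cases "x \<in> B")
    case True
    have "mpow B A (Suc (Suc n)) x y = (\<Sum>z\<in>B. A x z * mpow B A (Suc n) z y)" using True by simp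
    also have "\<dots> = (\<Sum>z\<in>B. A x z * (if y \<in> B then (\<Sum>w\<in>B. mpow B A n z w * A w y) else 0))"
      by (simp only: Suc.IH)
    also have "\<dots> = (if y \<in> B then (\<Sum>w\<in>B. (\<Sum>z\<in>B. A x z * mpow B A n z w) * A w y) else 0)"
      by (auto simp: sum_distrib_left sum_distrib_right mult_ac intro: sum.swap)
    also have "\<dots> = (if y \<in> B then (\<Sum>w\<in>B. mpow B A (Suc n) x w * A w y) else 0)"
      using True by simp
    finally show ?thesis .
  next
    case False
    then show ?thesis by (simp add: mpow_outside1)
  qed
qed

lemma mpow_sym:
  assumes fin: "finite B" and "\<And>x z. A x z = A z x"
  shows "mpow B A n x y = mpow B A n y x"
proof (induction n arbitrary: x y)
  case 0 then show ?case by auto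
next
  case (Suc n)
  show ?case
    by (subst mpow_Suc_right[OF fin], simp only: mpow.simps) (auto simp: Suc assms mult.commute intro: sum.cong)
qed

lemma mexp_sym:
  assumes fin: "finite B" and "\<And>x z. A x z = A z x"
  shows "mexp B A t x y = mexp B A t y x"
proof -
  have "mpow B A n x y = mpow B A n y x" for n by (rule mpow_sym[OF fin]) (rule assms)
  then show ?thesis unfolding mexp_def by simp
qed

section \<open>Dirichlet form\<close>

definition gen_apply :: "('d::finite) site set \<Rightarrow> 'd env \<Rightarrow> ('d site \<Rightarrow> real) \<Rightarrow> 'd site \<Rightarrow> real" where
  "gen_apply B m u x = (\<Sum>z\<in>B. gen m x z * u z)"

definition dirichlet :: "('d::finite) env \<Rightarrow> ('d site \<Rightarrow> real) \<Rightarrow> real" where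
  "dirichlet m u = (\<Sum>k\<in>UNIV. lsum (\<lambda>x. m {x, x + unitv k} * (grad k u x)\<^sup>2))"

lemma fsupp_vanishing_outside: "finite B \<Longrightarrow> (\<And>z. z \<notin> B \<Longrightarrow> u z = 0) \<Longrightarrow> fsupp u"
  unfolding fsupp_def by (erule finite_subset[rotated]) auto

lemma gen_apply_units:
  fixes x :: "('d::finite) site"
  assumes fin: "finite B" and x: "x \<in> B" and out: "\<And>z. z \<notin> B \<Longrightarrow> u z = 0"
  shows "gen_apply B m u x = (\<Sum>v\<in>units. m {x, x + v} * (u (x + v) - u x))"
proof -
  have gx: "gen m x x = - (\<Sum>v\<in>units. m {x, x + v})"
    unfolding gen_def by (simp add: rate_units)
  have "gen_apply B m u x = gen m x x * u x + (\<Sum>z\<in>B-{x}. gen m x z * u z)"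
    unfolding gen_apply_def using fin x by (simp add: sum.remove)
  also have "(\<Sum>z\<in>B-{x}. gen m x z * u z) = (\<Sum>z\<in>B-{x}. rate m x z * u z)"
    by (rule sum.cong) (auto simp: gen_def)
  also have "\<dots> = (\<Sum>v\<in>units. m {x, x + v} * u (x + v))"
  proof -
    define h where "h z = (if z = x then 0 else rate m x z * u z)" for z
    have h1: "lsum h = (\<Sum>z\<in>B-{x}. h z)"
      by (rule lsum_eq_sum) (use fin out in \<open>auto simp: h_def\<close>)
    have h2: "lsum h = (\<Sum>z\<in>(\<lambda>v. x + v) ` units. h z)"
    proof (rule lsum_eq_sum)
      show "finite ((\<lambda>v. x + v) ` units)" by (rule finite_imageI[OF finite_units])
      fix z assume z: "z \<notin> (\<lambda>v. x + v) ` units"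
      have "z - x \<notin> units"
      proof
        assume "z - x \<in> units"
        then have "x + (z - x) \<in> (\<lambda>v. x + v) ` units" by (rule imageI)
        then show False using z by simp
      qed
      then show "h z = 0" by (simp add: h_def rate_def)
    qed
    have h3: "(\<Sum>z\<in>(\<lambda>v. x + v) ` units. h z) = (\<Sum>v\<in>units. h (x + v))"
      by (subst sum.reindex) (auto simp: inj_on_def)
    have h4: "(\<Sum>v\<in>units. h (x + v)) = (\<Sum>v\<in>units. m {x, x + v} * u (x + v))"
    proof (rule sum.cong[OF refl])
      fix v :: "'d site" assume v: "v \<in> units"
      then have "x + v \<noteq> x" using zero_notin_units by auto
      then show "h (x + v) = m {x, x + v} * u (x + v)" using v by (simp add: h_def rate_units)
    qed
    have h5: "(\<Sum>z\<in>B-{x}. h z) = (\<Sum>z\<in>B-{x}. rate m x z * u z)"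
      by (rule sum.cong) (auto simp: h_def)
    show ?thesis using h1 h2 h3 h4 h5 by simp
  qed
  finally have q: "gen_apply B m u x = gen m x x * u x + (\<Sum>v\<in>units. m {x, x + v} * u (x + v))" .
  have "(\<Sum>v\<in>units. m {x, x + v} * (u (x + v) - u x))
      = (\<Sum>v\<in>units. m {x, x + v} * u (x + v)) - (\<Sum>v\<in>units. m {x, x + v}) * u x"
    by (simp add: right_diff_distrib sum_subtractf sum_distrib_right)
  then show ?thesis using q gx by simp
qed

lemma sum_gen_apply_eq_neg_dirichlet:
  assumes fin: "finite B" and out: "\<And>z. z \<notin> B \<Longrightarrow> u z = 0"
  shows "(\<Sum>x\<in>B. u x * gen_apply B m u x) = - dirichlet m u"
proof -
  have fu: "fsupp u" by (rule fsupp_vanishing_outside[OF fin out])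
  define F where "F k x = u x * (m {x, x + unitv k} * (u (x + unitv k) - u x))" for k x
  define G where "G k x = u x * (m {x, x - unitv k} * (u (x - unitv k) - u x))" for k x
  have fF: "fsupp (F k)" for k unfolding F_def by (rule fsupp_mult_left[OF fu])
  have fG: "fsupp (G k)" for k unfolding G_def by (rule fsupp_mult_left[OF fu])
  have "(\<Sum>x\<in>B. u x * gen_apply B m u x) = lsum (\<lambda>x. u x * (\<Sum>v\<in>units. m {x, x + v} * (u (x + v) - u x)))"
  proof -
    have "lsum (\<lambda>x. u x * (\<Sum>v\<in>units. m {x, x + v} * (u (x + v) - u x)))
        = (\<Sum>x\<in>B. u x * (\<Sum>v\<in>units. m {x, x + v} * (u (x + v) - u x)))"
      by (rule lsum_eq_sum) (use fin out in auto)
    also have "\<dots> = (\<Sum>x\<in>B. u x * gen_apply B m u x)"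
      by (rule sum.cong) (auto simp: gen_apply_units[OF fin _ out])
    finally show ?thesis by simp
  qed
  also have "\<dots> = lsum (\<lambda>x. (\<Sum>k\<in>UNIV. F k x) + (\<Sum>k\<in>UNIV. G k x))"
    by (simp add: sum_units sum_distrib_left distrib_left F_def G_def)
  also have "\<dots> = (\<Sum>k\<in>UNIV. lsum (F k)) + (\<Sum>k\<in>UNIV. lsum (G k))"
    by (subst lsum_add) (auto intro!: fsupp_sum fF fG simp: lsum_sum fF fG)
  also have "\<dots> = (\<Sum>k\<in>UNIV. lsum (F k) + lsum (G k))" by (simp add: sum.distrib)
  also have "\<dots> = (\<Sum>k\<in>UNIV. - lsum (\<lambda>x. m {x, x + unitv k} * (grad k u x)\<^sup>2))"
  proof (rule sum.cong[OF refl])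
    fix k
    have Gs: "lsum (G k) = lsum (\<lambda>x. u (x + unitv k) * (m {x, x + unitv k} * (u x - u (x + unitv k))))"
    proof -
      have "lsum (G k) = lsum (\<lambda>x. G k (x + unitv k))" by (rule lsum_shift[symmetric])
      also have "(\<lambda>x. G k (x + unitv k)) = (\<lambda>x. u (x + unitv k) * (m {x, x + unitv k} * (u x - u (x + unitv k))))"
        by (rule ext) (simp add: G_def insert_commute)
      finally show ?thesis .
    qed
    have "lsum (F k) + lsum (G k) = lsum (\<lambda>x. F k x + u (x + unitv k) * (m {x, x + unitv k} * (u x - u (x + unitv k))))"
      unfolding Gs by (rule lsum_add[symmetric, OF fF]) (rule fsupp_mult_left, rule fsupp_shift[OF fu])
    also have "\<dots> = lsum (\<lambda>x. - (m {x, x + unitv k} * (grad k u x)\<^sup>2))"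
      by (rule arg_cong[where f=lsum], rule ext) (simp add: F_def grad_def power2_eq_square algebra_simps)
    also have "\<dots> = - lsum (\<lambda>x. m {x, x + unitv k} * (grad k u x)\<^sup>2)"
      using lsum_cmult[of "\<lambda>x. m {x, x + unitv k} * (grad k u x)\<^sup>2" "-1"]
      by (simp add: fsupp_mult_right fsupp_sq fsupp_grad fu)
    finally show "lsum (F k) + lsum (G k) = - lsum (\<lambda>x. m {x, x + unitv k} * (grad k u x)\<^sup>2)" .
  qed
  also have "\<dots> = - dirichlet m u" by (simp add: dirichlet_def sum_negf)
  finally show ?thesis .
qed

lemma dirichlet_nonneg:
  assumes "\<forall>e\<in>lattice_edges. 0 \<le> m e" "fsupp u"
  shows "0 \<le> dirichlet m u"
  unfolding dirichlet_def using assms unitv_edge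
  by (intro sum_nonneg lsum_nonneg fsupp_mult_right fsupp_sq fsupp_grad mult_nonneg_nonneg) auto

lemma grad_sq_sum_le_dirichlet:
  assumes "\<forall>e\<in>lattice_edges. 1 \<le> m e" "fsupp u"
  shows "grad_sq_sum u \<le> dirichlet m u"
  unfolding dirichlet_def grad_sq_sum_def
proof (rule sum_mono, rule lsum_mono)
  fix k
  show "fsupp (\<lambda>x. (grad k u x)\<^sup>2)" by (intro fsupp_sq fsupp_grad assms)
  show "fsupp (\<lambda>x. m {x, x + unitv k} * (grad k u x)\<^sup>2)" by (intro fsupp_mult_right fsupp_sq fsupp_grad assms)
  fix x
  have "1 \<le> m {x, x + unitv k}" using assms unitv_edge by auto
  then show "(grad k u x)\<^sup>2 \<le> m {x, x + unitv k} * (grad k u x)\<^sup>2"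
    using mult_right_mono[of 1 "m {x, x + unitv k}" "(grad k u x)\<^sup>2"] by simp
qed

lemma killed_equation_unique:
  fixes u v :: "real \<Rightarrow> ('d::finite) site \<Rightarrow> real"
  assumes fin: "finite B" and m0: "\<forall>e\<in>lattice_edges. 0 \<le> m e"
    and du: "\<And>t x. x \<in> B \<Longrightarrow> ((\<lambda>t. u t x) has_real_derivative gen_apply B m (u t) x) (at t)"
    and dv: "\<And>t x. x \<in> B \<Longrightarrow> ((\<lambda>t. v t x) has_real_derivative gen_apply B m (v t) x) (at t)"
    and ou: "\<And>t x. x \<notin> B \<Longrightarrow> u t x = 0" and ov: "\<And>t x. x \<notin> B \<Longrightarrow> v t x = 0"
    and init: "\<And>x. u 0 x = v 0 x" and t: "0 \<le> t"
  shows "u t x = v t x"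
proof -
  define D where "D s x = u s x - v s x" for s x
  define \<psi> where "\<psi> s = (\<Sum>x\<in>B. (D s x)\<^sup>2)" for s
  have oD: "x \<notin> B \<Longrightarrow> D s x = 0" for s x using ou ov by (simp add: D_def)
  have QD: "gen_apply B m (u s) x - gen_apply B m (v s) x = gen_apply B m (D s) x" for s x
    unfolding gen_apply_def D_def by (simp add: sum_subtractf algebra_simps)
  have dD: "((\<lambda>s. D s x) has_real_derivative gen_apply B m (D s) x) (at s)" if "x \<in> B" for s x
    unfolding D_def QD[symmetric] using du[OF that] dv[OF that] by (rule DERIV_diff)
  have d\<psi>: "(\<psi> has_real_derivative (\<Sum>x\<in>B. 2 * D s x * gen_apply B m (D s) x)) (at s)" for s
  proof -
    have "((\<lambda>s. \<Sum>x\<in>B. (D s x)\<^sup>2) has_real_derivative (\<Sum>x\<in>B. 2 * D s x * gen_apply B m (D s) x)) (at s)"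
    proof (rule DERIV_sum)
      fix x assume "x \<in> B"
      from DERIV_mult[OF dD[OF this] dD[OF this]]
      show "((\<lambda>s. (D s x)\<^sup>2) has_real_derivative 2 * D s x * gen_apply B m (D s) x) (at s)"
        by (simp add: power2_eq_square algebra_simps)
    qed
    then show ?thesis unfolding \<psi>_def[abs_def] .
  qed
  have E: "(\<Sum>x\<in>B. 2 * D s x * gen_apply B m (D s) x) = - 2 * dirichlet m (D s)" for s
  proof -
    have "(\<Sum>x\<in>B. 2 * D s x * gen_apply B m (D s) x) = 2 * (\<Sum>x\<in>B. D s x * gen_apply B m (D s) x)"
      by (simp add: sum_distrib_left mult_ac)
    also have "\<dots> = - 2 * dirichlet m (D s)" using sum_gen_apply_eq_neg_dirichlet[OF fin oD] by simp
    finally show ?thesis .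
  qed
  have En: "0 \<le> dirichlet m (D s)" for s by (rule dirichlet_nonneg[OF m0 fsupp_vanishing_outside[OF fin oD]])
  have "\<psi> t \<le> \<psi> 0"
    by (rule DERIV_nonpos_imp_nonincreasing[OF t]) (use d\<psi> E En in \<open>auto intro!: exI\<close>)
  moreover have "\<psi> 0 = 0" unfolding \<psi>_def D_def using init by simp
  moreover have "0 \<le> \<psi> t" unfolding \<psi>_def by (simp add: sum_nonneg)
  ultimately have "\<psi> t = 0" by simp
  then have "\<forall>x\<in>B. (D t x)\<^sup>2 = 0" unfolding \<psi>_def using fin by (subst (asm) sum_nonneg_eq_0_iff) auto
  then have "D t x = 0" using oD[of x t] by (cases "x \<in> B") auto
  then show ?thesis by (simp add: D_def)
qed

lemma sum_gen_apply_sym: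
  assumes fin: "finite B"
  shows "(\<Sum>x\<in>B. u x * gen_apply B m w x) = (\<Sum>x\<in>B. w x * gen_apply B m u x)"
proof -
  have "(\<Sum>x\<in>B. u x * gen_apply B m w x) = (\<Sum>x\<in>B. \<Sum>z\<in>B. u x * gen m x z * w z)"
    unfolding gen_apply_def by (simp add: sum_distrib_left mult_ac)
  also have "\<dots> = (\<Sum>z\<in>B. \<Sum>x\<in>B. u x * gen m x z * w z)" by (rule sum.swap)
  also have "\<dots> = (\<Sum>z\<in>B. w z * gen_apply B m u z)"
    unfolding gen_apply_def by (simp add: sum_distrib_left mult_ac gen_sym[of m _ z for z])
  finally show ?thesis .
qed

lemma lsum_sq_difference_le_grad_sq_sum:
  fixes k :: "('d::finite) site \<Rightarrow> real"
  assumes fk: "fsupp k" and v: "v \<in> insert 0 units"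
  shows "lsum (\<lambda>y. (k (y - v) - k y)\<^sup>2) \<le> grad_sq_sum k"
proof -
  consider "v = 0" | j where "v = unitv j" | j where "v = - unitv j"
    using v by (auto simp: units_def)
  then show ?thesis
  proof cases
    case 1 then show ?thesis using grad_sq_sum_nonneg[OF fk] by simp
  next
    case (2 j)
    have "lsum (\<lambda>y. (k (y - v) - k y)\<^sup>2) = lsum (\<lambda>y. (k (y + v - v) - k (y + v))\<^sup>2)"
      by (rule lsum_shift[symmetric])
    also have "\<dots> = lsum (\<lambda>y. (grad j k y)\<^sup>2)"
      unfolding 2 grad_def by (simp add: power2_commute)
    also have "\<dots> \<le> grad_sq_sum k" by (rule lsum_grad_sq_le_grad_sq_sum[OF fk])
    finally show ?thesis .
  next
    case (3 j)
    have "lsum (\<lambda>y. (k (y - v) - k y)\<^sup>2) = lsum (\<lambda>y. (grad j k y)\<^sup>2)"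
      unfolding 3 grad_def by simp
    also have "\<dots> \<le> grad_sq_sum k" by (rule lsum_grad_sq_le_grad_sq_sum[OF fk])
    finally show ?thesis .
  qed
qed

lemma grad_sq_sum_le_l2:
  fixes k :: "('d::finite) site \<Rightarrow> real"
  assumes fk: "fsupp k"
  shows "grad_sq_sum k \<le> 4 * real CARD('d) * lsum (\<lambda>x. (k x)\<^sup>2)"
proof -
  have "lsum (\<lambda>x. (grad j k x)\<^sup>2) \<le> 4 * lsum (\<lambda>x. (k x)\<^sup>2)" for j
  proof -
    have "lsum (\<lambda>x. (grad j k x)\<^sup>2) \<le> lsum (\<lambda>x. 2 * (k (x + unitv j))\<^sup>2 + 2 * (k x)\<^sup>2)"
    proof (rule lsum_mono)
      show "fsupp (\<lambda>x. (grad j k x)\<^sup>2)" by (intro fsupp_sq fsupp_grad fk)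
      show "fsupp (\<lambda>x. 2 * (k (x + unitv j))\<^sup>2 + 2 * (k x)\<^sup>2)"
        by (intro fsupp_add fsupp_mult_right fsupp_sq fsupp_shift fk)
      fix x show "(grad j k x)\<^sup>2 \<le> 2 * (k (x + unitv j))\<^sup>2 + 2 * (k x)\<^sup>2"
        unfolding grad_def using square_add_le[of "k (x + unitv j)" "- k x"] by simp
    qed
    also have "\<dots> = 2 * lsum (\<lambda>x. (k (x + unitv j))\<^sup>2) + 2 * lsum (\<lambda>x. (k x)\<^sup>2)"
      by (subst lsum_add, (intro fsupp_mult_right fsupp_sq fsupp_shift fk)+,
          subst lsum_cmult, (intro fsupp_sq fsupp_shift fk)+,
          subst lsum_cmult, (intro fsupp_sq fsupp_shift fk)+) simp
    also have "\<dots> = 4 * lsum (\<lambda>x. (k x)\<^sup>2)" using lsum_shift[of "\<lambda>x. (k x)\<^sup>2" "unitv j"] by simp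
    finally show ?thesis .
  qed
  then have "grad_sq_sum k \<le> (\<Sum>j\<in>(UNIV::'d set). 4 * lsum (\<lambda>x. (k x)\<^sup>2))"
    unfolding grad_sq_sum_def by (intro sum_mono) auto
  then show ?thesis by simp
qed

section \<open>Killed kernels\<close>

text \<open>For \<open>\<lambda>\<close> at least every jump rate in the box, \<open>Q + \<lambda>I\<close> is entrywise nonnegative and
  \<open>exp(tQ) = e\<^sup>-\<^sup>\<lambda>\<^sup>t exp(t(Q + \<lambda>I))\<close>; this gives positivity of the killed kernels and their
  monotonicity in the box.\<close>
definition uniformised_gen :: "('d::finite) env \<Rightarrow> real \<Rightarrow> 'd site \<Rightarrow> 'd site \<Rightarrow> real" where
  "uniformised_gen m lam x z = gen m x z + (if x = z then lam else 0)"

lemma summable_mexp_terms: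
  assumes "finite B"
  shows "summable (\<lambda>n. t ^ n / fact n * mpow B A n x y)"
  using summable_mpow_terms[OF assms, of A x y t] by (simp add: mult_ac)

lemma mexp_gen_uniformised:
  assumes fin: "finite B" and m0: "\<forall>e\<in>lattice_edges. 0 \<le> m e" and t: "0 \<le> t"
  shows "mexp B (gen m) t x y = exp (- lam * t) * mexp B (uniformised_gen m lam) t x y"
proof -
  define u where "u s x = mexp B (gen m) s x y" for s x
  define v where "v s x = exp (- lam * s) * mexp B (uniformised_gen m lam) s x y" for s x
  have du: "((\<lambda>s. u s x) has_real_derivative gen_apply B m (u s) x) (at s)" if "x \<in> B" for s x
    unfolding u_def gen_apply_def by (rule mexp_deriv[OF fin that])
  have dv: "((\<lambda>s. v s x) has_real_derivative gen_apply B m (v s) x) (at s)" if x: "x \<in> B" for s x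
  proof -
    have e: "((\<lambda>s. exp (- lam * s)) has_real_derivative exp (- lam * s) * (- lam)) (at s)"
      by (auto intro!: derivative_eq_intros)
    have D: "((\<lambda>s. v s x) has_real_derivative
        exp (- lam * s) * (- lam) * mexp B (uniformised_gen m lam) s x y
        + (\<Sum>z\<in>B. uniformised_gen m lam x z * mexp B (uniformised_gen m lam) s z y) * exp (- lam * s)) (at s)"
      unfolding v_def by (rule DERIV_mult[OF e mexp_deriv[OF fin x]])
    have sM: "(\<Sum>z\<in>B. uniformised_gen m lam x z * mexp B (uniformised_gen m lam) s z y)
        = (\<Sum>z\<in>B. gen m x z * mexp B (uniformised_gen m lam) s z y) + lam * mexp B (uniformised_gen m lam) s x y"
    proof -
      have "(\<Sum>z\<in>B. uniformised_gen m lam x z * mexp B (uniformised_gen m lam) s z y)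
          = (\<Sum>z\<in>B. gen m x z * mexp B (uniformised_gen m lam) s z y)
            + (\<Sum>z\<in>B. (if x = z then lam else 0) * mexp B (uniformised_gen m lam) s z y)"
        unfolding uniformised_gen_def by (simp add: distrib_right sum.distrib)
      also have "(\<Sum>z\<in>B. (if x = z then lam else 0) * mexp B (uniformised_gen m lam) s z y)
          = lam * mexp B (uniformised_gen m lam) s x y"
        using fin x by (simp add: if_distrib[of "\<lambda>a. a * _"] sum.delta cong: if_cong)
      finally show ?thesis .
    qed
    have "exp (- lam * s) * (- lam) * mexp B (uniformised_gen m lam) s x y
        + (\<Sum>z\<in>B. uniformised_gen m lam x z * mexp B (uniformised_gen m lam) s z y) * exp (- lam * s)
        = gen_apply B m (v s) x"
      unfolding sM gen_apply_def v_def by (simp add: sum_distrib_left algebra_simps)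
    then show ?thesis using D by simp
  qed
  have ou: "x \<notin> B \<Longrightarrow> u s x = 0" for s x by (simp add: u_def mexp_outside1)
  have ov: "x \<notin> B \<Longrightarrow> v s x = 0" for s x by (simp add: v_def mexp_outside1)
  have init: "u 0 x = v 0 x" for x by (simp add: u_def v_def mexp_0)
  show ?thesis using killed_equation_unique[OF fin m0 du dv ou ov init t] by (simp add: u_def v_def)
qed

lemma neg_gen_diag_nonneg:
  assumes m0: "\<forall>e\<in>lattice_edges. 0 \<le> m e"
  shows "0 \<le> - gen m x x"
  by (simp add: gen_def sum_nonneg rate_nonneg[OF m0])

lemma uniformised_gen_nonneg:
  assumes m0: "\<forall>e\<in>lattice_edges. 0 \<le> m e" and lam: "- gen m x x \<le> lam"
  shows "0 \<le> uniformised_gen m lam x z"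
proof (cases "x = z")
  case True then show ?thesis using lam by (simp add: uniformised_gen_def)
next
  case False then show ?thesis using rate_nonneg[OF m0] by (simp add: uniformised_gen_def gen_def)
qed

lemma gen_row_sum_nonpos:
  assumes fin: "finite B" and m0: "\<forall>e\<in>lattice_edges. 0 \<le> m e" and x: "x \<in> B"
  shows "(\<Sum>z\<in>B. gen m x z) \<le> 0"
proof -
  define u where "u z = (if z \<in> B then 1 else (0::real))" for z :: "'a site"
  have "(\<Sum>z\<in>B. gen m x z) = gen_apply B m u x" unfolding gen_apply_def u_def by simp
  also have "\<dots> = (\<Sum>v\<in>units. m {x, x + v} * (u (x + v) - u x))"
    by (rule gen_apply_units[OF fin x]) (simp add: u_def)
  also have "\<dots> \<le> 0"
  proof (rule sum_nonpos)
    fix v :: "'a site" assume "v \<in> units"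
    then have "0 \<le> m {x, x + v}" using m0 units_edge by blast
    moreover have "u (x + v) - u x \<le> 0" using x by (simp add: u_def)
    ultimately show "m {x, x + v} * (u (x + v) - u x) \<le> 0" by (rule mult_nonneg_nonpos)
  qed
  finally show ?thesis .
qed

lemma mpow_uniformised_nonneg:
  assumes m0: "\<forall>e\<in>lattice_edges. 0 \<le> m e" and lam: "\<forall>x\<in>B. - gen m x x \<le> lam"
  shows "0 \<le> mpow B (uniformised_gen m lam) n x y"
proof (induction n arbitrary: x)
  case 0 then show ?case by simp
next
  case (Suc n) then show ?case
    using uniformised_gen_nonneg[OF m0] lam by (auto intro!: sum_nonneg mult_nonneg_nonneg)
qed

lemma mpow_uniformised_row_sum:
  assumes fin: "finite B" and m0: "\<forall>e\<in>lattice_edges. 0 \<le> m e"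
    and lam: "\<forall>x\<in>B. - gen m x x \<le> lam" and lam0: "0 \<le> lam"
  shows "(\<Sum>y\<in>B. mpow B (uniformised_gen m lam) n x y) \<le> lam ^ n"
proof (induction n arbitrary: x)
  case 0
  show ?case
  proof (cases "x \<in> B")
    case True
    have "(\<Sum>y\<in>B. mpow B (uniformised_gen m lam) 0 x y) = (\<Sum>y\<in>B. if y = x then 1 else 0)"
      by (rule sum.cong) auto
    then show ?thesis using fin True by (simp add: sum.delta)
  qed simp
next
  case (Suc n)
  show ?case
  proof (cases "x \<in> B")
    case x: True
    have "(\<Sum>y\<in>B. mpow B (uniformised_gen m lam) (Suc n) x y)
        = (\<Sum>z\<in>B. uniformised_gen m lam x z * (\<Sum>y\<in>B. mpow B (uniformised_gen m lam) n z y))"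
      using x by (simp add: sum_distrib_left) (rule sum.swap)
    also have "\<dots> \<le> (\<Sum>z\<in>B. uniformised_gen m lam x z * lam ^ n)"
      using Suc uniformised_gen_nonneg[OF m0] lam x by (intro sum_mono mult_left_mono) auto
    also have "\<dots> = (\<Sum>z\<in>B. uniformised_gen m lam x z) * lam ^ n" by (simp add: sum_distrib_right)
    also have "\<dots> \<le> lam * lam ^ n"
    proof (rule mult_right_mono)
      have "(\<Sum>z\<in>B. uniformised_gen m lam x z) = (\<Sum>z\<in>B. gen m x z) + lam"
        using fin x by (simp add: uniformised_gen_def sum.distrib sum.delta)
      then show "(\<Sum>z\<in>B. uniformised_gen m lam x z) \<le> lam" using gen_row_sum_nonpos[OF fin m0 x] by simp
    qed (use lam0 in simp)
    finally show ?thesis by simp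
  qed (use lam0 in simp)
qed

lemma mexp_uniformised_nonneg:
  assumes fin: "finite B" and m0: "\<forall>e\<in>lattice_edges. 0 \<le> m e"
    and lam: "\<forall>x\<in>B. - gen m x x \<le> lam" and t: "0 \<le> t"
  shows "0 \<le> mexp B (uniformised_gen m lam) t x y"
  unfolding mexp_def
  by (rule suminf_nonneg[OF summable_mexp_terms[OF fin]])
     (use mpow_uniformised_nonneg[OF m0 lam] t in simp)

lemma mexp_uniformised_row_sum:
  assumes fin: "finite B" and m0: "\<forall>e\<in>lattice_edges. 0 \<le> m e"
    and lam: "\<forall>x\<in>B. - gen m x x \<le> lam" and lam0: "0 \<le> lam" and t: "0 \<le> t"
  shows "(\<Sum>y\<in>B. mexp B (uniformised_gen m lam) t x y) \<le> exp (lam * t)"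
proof -
  have "(\<Sum>y\<in>B. mexp B (uniformised_gen m lam) t x y) = (\<Sum>n. \<Sum>y\<in>B. t ^ n / fact n * mpow B (uniformised_gen m lam) n x y)"
    unfolding mexp_def by (rule suminf_sum[symmetric]) (rule summable_mexp_terms[OF fin])
  also have "\<dots> \<le> (\<Sum>n. (lam * t) ^ n /\<^sub>R fact n)"
  proof (rule suminf_le)
    fix n
    have "(\<Sum>y\<in>B. t ^ n / fact n * mpow B (uniformised_gen m lam) n x y) = t ^ n / fact n * (\<Sum>y\<in>B. mpow B (uniformised_gen m lam) n x y)"
      by (simp add: sum_distrib_left)
    also have "\<dots> \<le> t ^ n / fact n * lam ^ n"
      by (intro mult_left_mono mpow_uniformised_row_sum[OF fin m0 lam lam0]) (use t in simp)
    also have "\<dots> = (lam * t) ^ n /\<^sub>R fact n" by (simp add: power_mult_distrib field_simps)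
    finally show "(\<Sum>y\<in>B. t ^ n / fact n * mpow B (uniformised_gen m lam) n x y) \<le> (lam * t) ^ n /\<^sub>R fact n" .
  next
    show "summable (\<lambda>n. \<Sum>y\<in>B. t ^ n / fact n * mpow B (uniformised_gen m lam) n x y)"
      by (intro summable_sum summable_mexp_terms[OF fin])
    show "summable (\<lambda>n. (lam * t) ^ n /\<^sub>R fact n)" using exp_converges by (rule sums_summable)
  qed
  also have "\<dots> = exp (lam * t)" using exp_converges by (rule sums_unique[symmetric])
  finally show ?thesis .
qed

lemma mpow_uniformised_mono:
  assumes m0: "\<forall>e\<in>lattice_edges. 0 \<le> m e" and sub: "B \<subseteq> B'" and fin: "finite B'"
    and lam: "\<forall>x\<in>B'. - gen m x x \<le> lam"
  shows "mpow B (uniformised_gen m lam) n x y \<le> mpow B' (uniformised_gen m lam) n x y"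
proof (induction n arbitrary: x)
  case 0 then show ?case using sub by auto
next
  case (Suc n)
  have lamB: "\<forall>x\<in>B. - gen m x x \<le> lam" using lam sub by auto
  show ?case
  proof (cases "x \<in> B")
    case x: True
    have "(\<Sum>z\<in>B. uniformised_gen m lam x z * mpow B (uniformised_gen m lam) n z y) \<le> (\<Sum>z\<in>B. uniformised_gen m lam x z * mpow B' (uniformised_gen m lam) n z y)"
      using Suc uniformised_gen_nonneg[OF m0] lam x sub by (intro sum_mono mult_left_mono) auto
    also have "\<dots> \<le> (\<Sum>z\<in>B'. uniformised_gen m lam x z * mpow B' (uniformised_gen m lam) n z y)"
      using uniformised_gen_nonneg[OF m0] mpow_uniformised_nonneg[OF m0 lam] lam x sub fin
      by (intro sum_mono2) (auto intro!: mult_nonneg_nonneg)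
    finally show ?thesis using x sub by auto
  next
    case False then show ?thesis using mpow_uniformised_nonneg[OF m0 lam, of "Suc n" x y] by simp
  qed
qed

lemma mexp_uniformised_mono:
  assumes m0: "\<forall>e\<in>lattice_edges. 0 \<le> m e" and sub: "B \<subseteq> B'" and fin: "finite B'"
    and lam: "\<forall>x\<in>B'. - gen m x x \<le> lam" and t: "0 \<le> t"
  shows "mexp B (uniformised_gen m lam) t x y \<le> mexp B' (uniformised_gen m lam) t x y"
  unfolding mexp_def
proof (rule suminf_le)
  have finB: "finite B" using sub fin by (rule finite_subset)
  show "summable (\<lambda>n. t ^ n / fact n * mpow B (uniformised_gen m lam) n x y)" by (rule summable_mexp_terms[OF finB])
  show "summable (\<lambda>n. t ^ n / fact n * mpow B' (uniformised_gen m lam) n x y)" by (rule summable_mexp_terms[OF fin])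
  fix n show "t ^ n / fact n * mpow B (uniformised_gen m lam) n x y \<le> t ^ n / fact n * mpow B' (uniformised_gen m lam) n x y"
    by (intro mult_left_mono mpow_uniformised_mono[OF m0 sub fin lam]) (use t in simp)
qed

lemma finite_box: "finite (box N :: ('d::finite) site set)"
proof -
  have "(box N :: 'd site set) \<subseteq> vec_lambda ` (PiE UNIV (\<lambda>_. {- int N..int N}))"
  proof
    fix x :: "'d site" assume x: "x \<in> box N"
    have h: "- int N \<le> x $ k \<and> x $ k \<le> int N" for k
    proof -
      have "\<bar>x $ k\<bar> \<le> int N" using x by (simp add: box_def)
      then have "x $ k \<le> int N \<and> - x $ k \<le> int N" by (simp only: abs_le_iff)
      then show ?thesis by linarith
    qed
    have "(\<lambda>k. x $ k) \<in> PiE UNIV (\<lambda>_. {- int N..int N})"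
      using h by (auto simp: PiE_def extensional_def)
    then show "x \<in> vec_lambda ` (PiE UNIV (\<lambda>_. {- int N..int N}))"
      by (intro image_eqI[where x="\<lambda>k. x $ k"]) auto
  qed
  moreover have "finite (vec_lambda ` (PiE UNIV (\<lambda>_. {- int N..int N})) :: 'd site set)"
    by (intro finite_imageI finite_PiE) auto
  ultimately show ?thesis by (rule finite_subset)
qed

lemma zero_in_box: "0 \<in> box N"
  by (simp add: box_def)

lemma box_mono: "N \<le> N' \<Longrightarrow> box N \<subseteq> box N'"
  by (auto simp: box_def) (meson dual_order.trans of_nat_le_iff)

definition box_rate_bound :: "('d::finite) env \<Rightarrow> nat \<Rightarrow> real" where
  "box_rate_bound m N = (\<Sum>x\<in>box N. - gen m x x)"

lemma box_rate_bound_ge: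
  assumes m0: "\<forall>e\<in>lattice_edges. 0 \<le> m e"
  shows "\<forall>x\<in>box N. - gen m x x \<le> box_rate_bound m N" "0 \<le> box_rate_bound m N"
proof -
  show "\<forall>x\<in>box N. - gen m x x \<le> box_rate_bound m N"
    unfolding box_rate_bound_def using finite_box neg_gen_diag_nonneg[OF m0]
    by (auto intro!: member_le_sum)
  show "0 \<le> box_rate_bound m N" unfolding box_rate_bound_def using neg_gen_diag_nonneg[OF m0] by (simp add: sum_nonneg)
qed

lemma killed_kernel_nonneg:
  assumes m0: "\<forall>e\<in>lattice_edges. 0 \<le> m e" and t: "0 \<le> t"
  shows "0 \<le> killed_kernel N m t x y"
  unfolding killed_kernel_eq_mexp mexp_gen_uniformised[OF finite_box m0 t, of _ _ _ "box_rate_bound m N"]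
  by (intro mult_nonneg_nonneg mexp_uniformised_nonneg[OF finite_box m0 box_rate_bound_ge(1)[OF m0] t]) simp

lemma killed_kernel_row_sum:
  assumes m0: "\<forall>e\<in>lattice_edges. 0 \<le> m e" and t: "0 \<le> t"
  shows "(\<Sum>y\<in>box N. killed_kernel N m t x y) \<le> 1"
proof -
  let ?l = "box_rate_bound m N"
  have "(\<Sum>y\<in>box N. killed_kernel N m t x y) = exp (- ?l * t) * (\<Sum>y\<in>box N. mexp (box N) (uniformised_gen m ?l) t x y)"
    unfolding killed_kernel_eq_mexp mexp_gen_uniformised[OF finite_box m0 t, of _ _ _ ?l] by (simp add: sum_distrib_left)
  also have "\<dots> \<le> exp (- ?l * t) * exp (?l * t)"
    by (intro mult_left_mono mexp_uniformised_row_sum[OF finite_box m0 box_rate_bound_ge(1)[OF m0] box_rate_bound_ge(2)[OF m0] t]) simp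
  also have "\<dots> = 1" by (simp add: exp_add[symmetric])
  finally show ?thesis .
qed

lemma killed_kernel_outside1: "x \<notin> box N \<Longrightarrow> killed_kernel N m t x y = 0"
  by (simp add: killed_kernel_eq_mexp mexp_outside1)

lemma killed_kernel_outside2: "y \<notin> box N \<Longrightarrow> killed_kernel N m t x y = 0"
  by (simp add: killed_kernel_eq_mexp mexp_outside2)

lemma killed_kernel_le_1:
  assumes m0: "\<forall>e\<in>lattice_edges. 0 \<le> m e" and t: "0 \<le> t"
  shows "killed_kernel N m t x y \<le> 1"
proof (cases "y \<in> box N")
  case True
  have "killed_kernel N m t x y \<le> (\<Sum>y\<in>box N. killed_kernel N m t x y)"
    using True finite_box killed_kernel_nonneg[OF m0 t] by (intro member_le_sum) auto
  then show ?thesis using killed_kernel_row_sum[OF m0 t, of N x] by simp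
qed (simp add: killed_kernel_outside2)

lemma killed_kernel_mono:
  assumes m0: "\<forall>e\<in>lattice_edges. 0 \<le> m e" and t: "0 \<le> t" and NN: "N \<le> N'"
  shows "killed_kernel N m t x y \<le> killed_kernel N' m t x y"
proof -
  let ?l = "box_rate_bound m N'"
  have lamN: "\<forall>x\<in>box N. - gen m x x \<le> ?l" using box_rate_bound_ge(1)[OF m0, of N'] box_mono[OF NN] by auto
  have "killed_kernel N m t x y = exp (- ?l * t) * mexp (box N) (uniformised_gen m ?l) t x y"
    unfolding killed_kernel_eq_mexp by (rule mexp_gen_uniformised[OF finite_box m0 t])
  also have "\<dots> \<le> exp (- ?l * t) * mexp (box N') (uniformised_gen m ?l) t x y"
    by (intro mult_left_mono mexp_uniformised_mono[OF m0 box_mono[OF NN] finite_box box_rate_bound_ge(1)[OF m0] t]) simp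
  also have "\<dots> = killed_kernel N' m t x y"
    unfolding killed_kernel_eq_mexp by (rule mexp_gen_uniformised[OF finite_box m0 t, symmetric])
  finally show ?thesis .
qed

lemma killed_kernel_tendsto:
  assumes m0: "\<forall>e\<in>lattice_edges. 0 \<le> m e" and t: "0 \<le> t"
  shows "(\<lambda>N. killed_kernel N m t x y) \<longlonglongrightarrow> kernel m t x y"
proof -
  have inc: "incseq (\<lambda>N. killed_kernel N m t x y)"
    by (rule incseq_SucI) (rule killed_kernel_mono[OF m0 t], simp)
  have bdd: "bdd_above (range (\<lambda>N. killed_kernel N m t x y))"
    by (rule bdd_aboveI[where M=1]) (auto simp: killed_kernel_le_1[OF m0 t])
  have L: "(\<lambda>N. killed_kernel N m t x y) \<longlonglongrightarrow> (SUP N. killed_kernel N m t x y)"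
    by (rule LIMSEQ_incseq_SUP[OF bdd inc])
  then have "kernel m t x y = (SUP N. killed_kernel N m t x y)"
    unfolding kernel_def by (rule limI)
  then show ?thesis using L by simp
qed

lemma killed_le_kernel:
  assumes m0: "\<forall>e\<in>lattice_edges. 0 \<le> m e" and t: "0 \<le> t"
  shows "killed_kernel N m t x y \<le> kernel m t x y"
proof -
  have inc: "incseq (\<lambda>N. killed_kernel N m t x y)"
    by (rule incseq_SucI) (rule killed_kernel_mono[OF m0 t], simp)
  show ?thesis by (rule incseq_le[OF inc killed_kernel_tendsto[OF m0 t]])
qed

lemma killed_kernel_sym:
  "killed_kernel N m t x y = killed_kernel N m t y x"
  unfolding killed_kernel_eq_mexp by (rule mexp_sym[OF finite_box]) (rule gen_sym)

section \<open>Decay from the Nash inequality\<close>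

definition nash_power_const :: "real \<Rightarrow> nat \<Rightarrow> real" where
  "nash_power_const a d = 1 / (8 * a * 4 powr (2 / real d))"

lemma nash_power_const_pos: "0 < a \<Longrightarrow> 0 < nash_power_const a d"
  unfolding nash_power_const_def by simp

lemma nash_to_power:
  fixes p E a :: real and d :: nat
  assumes a: "0 < a" and d: "0 < d" and p: "0 < p" "p \<le> 1" and E: "0 \<le> E"
    and nash: "\<And>R::nat. 0 < R \<Longrightarrow> p \<le> a * (real R)\<^sup>2 * E + 2 / real R ^ d"
  shows "nash_power_const a d * p powr (1 + 2 / real d) \<le> E"
proof -
  txt \<open>With \<open>R \<approx> (4/p)\<^bsup>1/d\<^esup>\<close> the second term of the Nash bound is at most \<open>p/2\<close>.\<close>
  define \<sigma> where "\<sigma> = (4 / p) powr (1 / real d)"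
  have q1: "1 \<le> 4 / p" using p by simp
  have s1: "1 \<le> \<sigma>" unfolding \<sigma>_def by (rule ge_one_powr_ge_zero[OF q1]) simp
  define R where "R = nat \<lceil>\<sigma>\<rceil>"
  have R1: "\<sigma> \<le> real R" unfolding R_def using s1 by linarith
  have R2: "real R \<le> 2 * \<sigma>" unfolding R_def using s1 by linarith
  have R0: "0 < R" using R1 s1 by simp
  have sd: "\<sigma> ^ d = 4 / p"
  proof -
    have "\<sigma> ^ d = \<sigma> powr real d" using s1 by (simp add: powr_realpow)
    also have "\<dots> = (4 / p) powr (1 / real d * real d)" unfolding \<sigma>_def by (simp add: powr_powr)
    also have "\<dots> = 4 / p" using d p by simp
    finally show ?thesis .
  qed
  have "4 / p \<le> real R ^ d" unfolding sd[symmetric] using s1 R1 by (intro power_mono) auto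
  then have t2: "2 / real R ^ d \<le> p / 2"
    using p by (simp add: divide_le_eq field_simps)
  have "p / 2 \<le> a * (real R)\<^sup>2 * E" using nash[OF R0] t2 by linarith
  also have "\<dots> \<le> a * (2 * \<sigma>)\<^sup>2 * E"
  proof -
    have "(real R)\<^sup>2 \<le> (2 * \<sigma>)\<^sup>2" using R2 by (intro power_mono) auto
    then show ?thesis using a E by (intro mult_right_mono mult_left_mono) auto
  qed
  finally have h: "p / 2 \<le> 4 * a * \<sigma>\<^sup>2 * E" by (simp add: power2_eq_square)
  have s2: "\<sigma>\<^sup>2 = 4 powr (2 / real d) / p powr (2 / real d)"
  proof -
    have "\<sigma>\<^sup>2 = \<sigma> powr 2" using powr_realpow[of \<sigma> 2] s1 by simp
    also have "\<dots> = (4 / p) powr (2 / real d)" unfolding \<sigma>_def by (simp add: powr_powr)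
    also have "\<dots> = 4 powr (2 / real d) / p powr (2 / real d)" using p by (simp add: powr_divide)
    finally show ?thesis .
  qed
  define Pp where "Pp = p powr (2 / real d)"
  define A4 where "A4 = (4::real) powr (2 / real d)"
  have pp: "0 < Pp" using p unfolding Pp_def by simp
  have f4: "0 < A4" unfolding A4_def by simp
  from h have "p / 2 * Pp \<le> 4 * a * (A4 / Pp) * E * Pp"
    unfolding s2 A4_def[symmetric] Pp_def[symmetric] using pp by (intro mult_right_mono) auto
  also have "4 * a * (A4 / Pp) * E * Pp = 4 * a * A4 * E" using pp by simp
  finally have "p * Pp \<le> 8 * a * A4 * E" by simp
  then have "p * Pp / (8 * a * A4) \<le> E"
    using a f4 by (subst pos_divide_le_eq) (simp_all add: mult_ac)
  moreover have "p powr (1 + 2 / real d) = p * Pp" unfolding Pp_def using p by (simp add: powr_add)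
  ultimately show ?thesis unfolding nash_power_const_def A4_def[symmetric] by simp
qed

lemma mass_antitone:
  fixes \<phi> En :: "real \<Rightarrow> real"
  assumes d\<phi>: "\<And>s. 0 \<le> s \<Longrightarrow> (\<phi> has_real_derivative (- 2 * En s)) (at s)"
    and En0: "\<And>s. 0 \<le> s \<Longrightarrow> 0 \<le> En s"
    and "0 \<le> s" "s \<le> s'"
  shows "\<phi> s' \<le> \<phi> s"
proof (rule DERIV_nonpos_imp_nonincreasing[OF \<open>s \<le> s'\<close>])
  fix x assume "s \<le> x" "x \<le> s'"
  then have x: "0 \<le> x" using \<open>0 \<le> s\<close> by simp
  show "\<exists>y. DERIV \<phi> x :> y \<and> y \<le> 0"
    using d\<phi>[OF x] En0[OF x] by (intro exI[of _ "- 2 * En x"]) auto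
qed

lemma mass_powr_deriv_ge:
  fixes \<phi> En :: "real \<Rightarrow> real" and d :: nat
  assumes d: "0 < d" and d\<phi>: "(\<phi> has_real_derivative (- 2 * En s)) (at s)"
    and Ep: "c * \<phi> s powr (1 + 2 / real d) \<le> En s" and ps: "0 < \<phi> s"
  shows "\<exists>y. ((\<lambda>x. \<phi> x powr (- 2 / real d) - 4 * c / real d * x) has_real_derivative y) (at s) \<and> 0 \<le> y"
proof -
  define r where "r = - 2 / real d"
  have P: "((\<lambda>x. \<phi> x powr r) has_real_derivative r * \<phi> s powr (r - 1) * (- 2 * En s)) (at s)"
    using DERIV_fun_powr[OF d\<phi> ps, of r] by simp
  have L: "((\<lambda>x. 4 * c / real d * x) has_real_derivative 4 * c / real d) (at s)"
    using d by (auto intro!: derivative_eq_intros)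
  define X where "X = \<phi> s powr (r - 1)"
  define Y where "Y = \<phi> s powr (1 + 2 / real d)"
  have X0: "0 \<le> X" unfolding X_def by simp
  have XY: "X * Y = 1"
  proof -
    have "X * Y = \<phi> s powr ((r - 1) + (1 + 2 / real d))"
      unfolding X_def Y_def by (rule powr_add[symmetric])
    also have "(r - 1) + (1 + 2 / real d) = 0" unfolding r_def by simp
    finally show ?thesis using ps by simp
  qed
  have "4 * c / real d = 4 / real d * (X * (c * Y))"
    using XY by (simp add: mult_ac)
  also have "\<dots> \<le> 4 / real d * (X * En s)"
    using Ep X0 unfolding Y_def by (intro mult_left_mono) auto
  also have "\<dots> = r * X * (- 2 * En s)" unfolding r_def by (simp add: field_simps)
  finally have "0 \<le> r * X * (- 2 * En s) - 4 * c / real d" by simp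
  then show ?thesis using DERIV_diff[OF P L] unfolding X_def r_def by blast
qed

lemma nash_ode_decay:
  fixes \<phi> En :: "real \<Rightarrow> real" and d :: nat and c T :: real
  assumes d: "0 < d" and c: "0 < c"
    and d\<phi>: "\<And>s. 0 \<le> s \<Longrightarrow> (\<phi> has_real_derivative (- 2 * En s)) (at s)"
    and En0: "\<And>s. 0 \<le> s \<Longrightarrow> 0 \<le> En s"
    and Ep: "\<And>s. 0 \<le> s \<Longrightarrow> 0 < \<phi> s \<Longrightarrow> c * \<phi> s powr (1 + 2 / real d) \<le> En s"
    and \<phi>0: "\<phi> 0 \<le> 1" and \<phi>nn: "\<And>s. 0 \<le> s \<Longrightarrow> 0 \<le> \<phi> s"
    and T: "0 \<le> T"
  shows "\<phi> T \<le> (1 + 4 * c / real d * T) powr (- (real d / 2))"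
proof (cases "\<phi> T = 0")
  case True then show ?thesis by simp
next
  case False
  then have pT: "0 < \<phi> T" using \<phi>nn[OF T] by simp
  have pos: "0 < \<phi> s" if "0 \<le> s" "s \<le> T" for s
    using mass_antitone[OF d\<phi> En0 that] pT by simp
  define r where "r = - 2 / real d"
  define g where "g s = \<phi> s powr r - 4 * c / real d * s" for s
  have "g 0 \<le> g T"
  proof (rule DERIV_nonneg_imp_nondecreasing[OF T])
    fix s assume s: "0 \<le> s" "s \<le> T"
    show "\<exists>y. (g has_real_derivative y) (at s) \<and> 0 \<le> y"
      unfolding g_def[abs_def] r_def
      by (rule mass_powr_deriv_ge[where \<phi>=\<phi> and En=En and c=c, OF d d\<phi>[OF s(1)] Ep[OF s(1) pos[OF s]] pos[OF s]])
  qed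
  moreover have "1 \<le> \<phi> 0 powr r"
  proof -
    have p0: "0 < \<phi> 0" using pos[of 0] T by simp
    have "1 \<le> (1 / \<phi> 0) powr (2 / real d)"
      by (rule ge_one_powr_ge_zero) (use p0 \<phi>0 in auto)
    also have "(1 / \<phi> 0) powr (2 / real d) = \<phi> 0 powr r"
      unfolding r_def using p0 by (simp add: powr_divide powr_minus_divide)
    finally show ?thesis .
  qed
  ultimately have ge: "1 + 4 * c / real d * T \<le> \<phi> T powr r" unfolding g_def by simp
  have "(\<phi> T powr r) powr (- (real d / 2)) \<le> (1 + 4 * c / real d * T) powr (- (real d / 2))"
  proof (rule powr_mono2'[OF _ _ ge])
    have "0 \<le> 4 * c / real d * T" using c d T by simp
    then show "0 < 1 + 4 * c / real d * T" by linarith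
  qed simp
  moreover have "(\<phi> T powr r) powr (- (real d / 2)) = \<phi> T"
    unfolding powr_powr r_def using d pT by simp
  ultimately show ?thesis by simp
qed

text \<open>Because the energy is non-increasing, this gains a factor \<open>1/t\<close> over the decay of \<open>\<phi>\<close>.\<close>
lemma energy_le_mass_drop:
  fixes \<phi> En :: "real \<Rightarrow> real" and t :: real
  assumes d\<phi>: "\<And>s. 0 \<le> s \<Longrightarrow> (\<phi> has_real_derivative (- 2 * En s)) (at s)"
    and dE: "\<And>s. 0 \<le> s \<Longrightarrow> \<exists>D. (En has_real_derivative D) (at s) \<and> D \<le> 0"
    and t: "0 < t"
  shows "t * En t \<le> \<phi> (t / 2) - \<phi> t"
proof -
  obtain z where z: "t / 2 < z" "z < t" "\<phi> t - \<phi> (t / 2) = (t - t / 2) * (- 2 * En z)"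
    using MVT2[of "t/2" t \<phi> "\<lambda>s. - 2 * En s"] t d\<phi> by auto
  have "En t \<le> En z"
    by (rule DERIV_nonpos_imp_nonincreasing) (use z t dE in auto)
  then have "t * En t \<le> t * En z" using t by simp
  also have "\<dots> = \<phi> (t / 2) - \<phi> t" using z(3) by (simp add: field_simps)
  finally show ?thesis .
qed

lemma le_powr_decay_div:
  fixes d P E t :: real
  assumes t: "1 \<le> t" and P: "0 \<le> P" and E: "t * E \<le> P * (t + 1) powr (- (d / 2))"
  shows "E \<le> 2 * P / (t + 1) powr (d / 2 + 1)"
proof -
  define Q where "Q = (t + 1) powr (d / 2)"
  have Q0: "0 < Q" unfolding Q_def using t by simp
  have "E \<le> P / Q / t"
    using E t Q0 by (simp add: Q_def powr_minus_divide field_simps)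
  also have "\<dots> \<le> P / Q * (2 / (t + 1))"
  proof -
    have "1 / t \<le> 2 / (t + 1)" using t by (simp add: field_simps)
    then show ?thesis using P Q0 by (metis mult_left_mono times_divide_eq_right mult_1_right
        divide_nonneg_pos)
  qed
  also have "(t + 1) powr (d / 2 + 1) = Q * (t + 1)"
    unfolding Q_def using t by (simp add: powr_add)
  then have "P / Q * (2 / (t + 1)) = 2 * P / (t + 1) powr (d / 2 + 1)" by simp
  finally show ?thesis .
qed

definition energy_decay_const :: "real \<Rightarrow> nat \<Rightarrow> real" where
  "energy_decay_const a d = 2 * (min 1 (4 * nash_power_const a d / real d) / 2) powr (- (real d / 2))"

lemma energy_decay_const_pos: "0 < a \<Longrightarrow> 0 < d \<Longrightarrow> 0 < energy_decay_const a d"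
proof -
  assume "0 < a" "0 < d"
  then have "0 < min 1 (4 * nash_power_const a d / real d)"
    using nash_power_const_pos[of a d] by simp
  then show ?thesis unfolding energy_decay_const_def by simp
qed

lemma energy_decay:
  fixes \<phi> En :: "real \<Rightarrow> real" and a t :: real and d :: nat
  assumes a: "0 < a" and d: "0 < d"
    and d\<phi>: "\<And>s. 0 \<le> s \<Longrightarrow> (\<phi> has_real_derivative (- 2 * En s)) (at s)"
    and dE: "\<And>s. 0 \<le> s \<Longrightarrow> \<exists>D. (En has_real_derivative D) (at s) \<and> D \<le> 0"
    and En0: "\<And>s. 0 \<le> s \<Longrightarrow> 0 \<le> En s"
    and \<phi>0: "\<phi> 0 \<le> 1" and \<phi>nn: "\<And>s. 0 \<le> s \<Longrightarrow> 0 \<le> \<phi> s"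
    and nash: "\<And>s R. 0 \<le> s \<Longrightarrow> 0 < R \<Longrightarrow> \<phi> s \<le> a * (real R)\<^sup>2 * En s + 2 / real R ^ d"
    and t: "1 \<le> t"
  shows "En t \<le> energy_decay_const a d / (t + 1) powr (real d / 2 + 1)"
proof -
  define c where "c = nash_power_const a d"
  have c: "0 < c" unfolding c_def by (rule nash_power_const_pos[OF a])
  define c2 where "c2 = 4 * c / real d"
  define c3 where "c3 = min 1 c2"
  have c3: "0 < c3" "c3 \<le> 1" "c3 \<le> c2" unfolding c3_def c2_def using c d by auto
  have Ep: "c * \<phi> s powr (1 + 2 / real d) \<le> En s" if "0 \<le> s" "0 < \<phi> s" for s
    unfolding c_def
  proof (rule nash_to_power[OF a d that(2) _ En0[OF that(1)]])
    show "\<phi> s \<le> 1" using mass_antitone[OF d\<phi> En0 _ that(1)] \<phi>0 by simp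
  qed (rule nash[OF that(1)])
  have t0: "0 < t" and t2: "0 \<le> t / 2" using t by simp_all
  have "t * En t \<le> \<phi> (t / 2)"
    using energy_le_mass_drop[OF d\<phi> dE t0] \<phi>nn[of t] t by simp
  also have "\<dots> \<le> (1 + c2 * (t / 2)) powr (- (real d / 2))"
    unfolding c2_def by (rule nash_ode_decay[OF d c d\<phi> En0 Ep \<phi>0 \<phi>nn t2])
  also have "\<dots> \<le> (c3 / 2 * (t + 1)) powr (- (real d / 2))"
  proof (rule powr_mono2')
    show "0 < c3 / 2 * (t + 1)" using c3 t by simp
    have "c3 * (t / 2) \<le> c2 * (t / 2)" using c3 t by (intro mult_right_mono) auto
    then show "c3 / 2 * (t + 1) \<le> 1 + c2 * (t / 2)" using c3 by (simp add: field_simps)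
  qed simp
  also have "\<dots> = (c3 / 2) powr (- (real d / 2)) * (t + 1) powr (- (real d / 2))"
    using powr_mult[of "c3 / 2" "t + 1" "- (real d / 2)"] c3 t by simp
  finally have "t * En t \<le> (c3 / 2) powr (- (real d / 2)) * (t + 1) powr (- (real d / 2))" .
  then have "En t \<le> 2 * (c3 / 2) powr (- (real d / 2)) / (t + 1) powr (real d / 2 + 1)"
    by (intro le_powr_decay_div[OF t]) simp_all
  then show ?thesis unfolding energy_decay_const_def c3_def c2_def c_def by simp
qed

definition gradient_decay_const :: "nat \<Rightarrow> real" where
  "gradient_decay_const d = energy_decay_const (2 * 4 ^ d) d + 4 * real d * 2 powr (real d / 2 + 1)"

lemma gradient_decay_const_pos: "0 < d \<Longrightarrow> 0 < gradient_decay_const d"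
  unfolding gradient_decay_const_def using energy_decay_const_pos[of "2 * 4 ^ d" d]
  by (simp add: add_pos_nonneg)

context
  fixes m :: "('d::finite) env" and N :: nat
  assumes m1: "\<forall>e\<in>lattice_edges. 1 \<le> m e"
begin

text \<open>The origin is put in the second argument so that \<open>killed_heat\<close> solves \<open>\<partial>\<^sub>t u = Q u\<close>;
  by symmetry it is also the kernel started at the origin.\<close>
definition killed_heat :: "real \<Rightarrow> 'd site \<Rightarrow> real" where
  "killed_heat s x = killed_kernel N m s x 0"

definition killed_mass :: "real \<Rightarrow> real" where
  "killed_mass s = (\<Sum>x\<in>box N. (killed_heat s x)\<^sup>2)"

definition killed_energy :: "real \<Rightarrow> real" where
  "killed_energy s = - (\<Sum>x\<in>box N. killed_heat s x * gen_apply (box N) m (killed_heat s) x)"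

lemma killed_heat_deriv:
  "x \<in> box N \<Longrightarrow>
     ((\<lambda>s. killed_heat s x) has_real_derivative gen_apply (box N) m (killed_heat s) x) (at s)"
  unfolding killed_heat_def[abs_def] killed_kernel_eq_mexp gen_apply_def
  by (rule mexp_deriv[OF finite_box])

lemma killed_heat_outside: "x \<notin> box N \<Longrightarrow> killed_heat s x = 0"
  by (simp add: killed_heat_def killed_kernel_outside1)

lemma killed_heat_nonneg: "0 \<le> s \<Longrightarrow> 0 \<le> killed_heat s x"
  unfolding killed_heat_def by (rule killed_kernel_nonneg[OF conductances_nonneg[OF m1]])

lemma fsupp_killed_heat: "fsupp (killed_heat s)"
  by (rule fsupp_vanishing_outside[OF finite_box killed_heat_outside])

lemma lsum_killed_heat: "0 \<le> s \<Longrightarrow> lsum (killed_heat s) \<le> 1"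
proof -
  assume s: "0 \<le> s"
  have "lsum (killed_heat s) = (\<Sum>x\<in>box N. killed_heat s x)"
    by (rule lsum_eq_sum[OF finite_box killed_heat_outside])
  also have "\<dots> = (\<Sum>x\<in>box N. killed_kernel N m s 0 x)"
    unfolding killed_heat_def by (simp add: killed_kernel_sym)
  also have "\<dots> \<le> 1" by (rule killed_kernel_row_sum[OF conductances_nonneg[OF m1] s])
  finally show ?thesis .
qed

lemma killed_heat_0: "killed_heat 0 x = (if x = 0 then 1 else 0)"
  unfolding killed_heat_def killed_kernel_eq_mexp mexp_0 using zero_in_box by auto

lemma killed_mass_eq_lsum: "killed_mass s = lsum (\<lambda>x. (killed_heat s x)\<^sup>2)"
  unfolding killed_mass_def
  by (rule lsum_eq_sum[OF finite_box, symmetric]) (simp add: killed_heat_outside)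

lemma grad_sq_sum_le_killed_energy: "grad_sq_sum (killed_heat s) \<le> killed_energy s"
proof -
  have "(\<Sum>x\<in>box N. killed_heat s x * gen_apply (box N) m (killed_heat s) x)
      = - dirichlet m (killed_heat s)"
    by (rule sum_gen_apply_eq_neg_dirichlet[OF finite_box]) (rule killed_heat_outside)
  then have "killed_energy s = dirichlet m (killed_heat s)"
    unfolding killed_energy_def by simp
  then show ?thesis by (simp add: grad_sq_sum_le_dirichlet[OF m1 fsupp_killed_heat])
qed

lemma killed_energy_nonneg: "0 \<le> killed_energy s"
  using grad_sq_sum_le_killed_energy[of s] grad_sq_sum_nonneg[OF fsupp_killed_heat, of s] by simp

lemma killed_mass_deriv: "(killed_mass has_real_derivative (- 2 * killed_energy s)) (at s)"
proof -
  have "((\<lambda>s. \<Sum>x\<in>box N. (killed_heat s x)\<^sup>2) has_real_derivative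
      (\<Sum>x\<in>box N. 2 * killed_heat s x * gen_apply (box N) m (killed_heat s) x)) (at s)"
  proof (rule DERIV_sum)
    fix x :: "'d site" assume x: "x \<in> box N"
    from DERIV_mult[OF killed_heat_deriv[OF x] killed_heat_deriv[OF x]]
    show "((\<lambda>s. (killed_heat s x)\<^sup>2) has_real_derivative
        2 * killed_heat s x * gen_apply (box N) m (killed_heat s) x) (at s)"
      by (simp add: power2_eq_square algebra_simps)
  qed
  moreover have "(\<Sum>x\<in>box N. 2 * killed_heat s x * gen_apply (box N) m (killed_heat s) x)
      = - 2 * killed_energy s"
    unfolding killed_energy_def by (simp add: sum_distrib_left mult_ac sum_negf)
  ultimately show ?thesis unfolding killed_mass_def[abs_def] by simp
qed

text \<open>Writing \<open>w = Q u\<close>, the energy \<open>-\<langle>u, Q u\<rangle>\<close> has derivative \<open>-2 \<langle>Q u, Q u\<rangle> \<le> 0\<close> by symmetry of \<open>Q\<close>.\<close>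
lemma killed_energy_deriv: "\<exists>D. (killed_energy has_real_derivative D) (at s) \<and> D \<le> 0"
proof -
  define w where "w s x = gen_apply (box N) m (killed_heat s) x" for s x
  have dw: "((\<lambda>s. w s x) has_real_derivative gen_apply (box N) m (w s) x) (at s)" for s x
  proof -
    have "((\<lambda>s. \<Sum>z\<in>box N. gen m x z * killed_heat s z) has_real_derivative
        (\<Sum>z\<in>box N. gen m x z * w s z)) (at s)"
      unfolding w_def by (intro DERIV_sum DERIV_cmult killed_heat_deriv)
    then show ?thesis unfolding w_def gen_apply_def .
  qed
  have "((\<lambda>s. \<Sum>x\<in>box N. killed_heat s x * w s x) has_real_derivative
      (\<Sum>x\<in>box N. w s x * w s x + killed_heat s x * gen_apply (box N) m (w s) x)) (at s)"
  proof (rule DERIV_sum)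
    fix x :: "'d site" assume x: "x \<in> box N"
    from DERIV_mult[OF killed_heat_deriv[OF x] dw[of x]]
    show "((\<lambda>s. killed_heat s x * w s x) has_real_derivative
        w s x * w s x + killed_heat s x * gen_apply (box N) m (w s) x) (at s)"
      unfolding w_def by (simp add: mult_ac)
  qed
  then have D: "(killed_energy has_real_derivative
      - (\<Sum>x\<in>box N. w s x * w s x + killed_heat s x * gen_apply (box N) m (w s) x)) (at s)"
    unfolding killed_energy_def[abs_def] w_def by (rule DERIV_minus)
  have "(\<Sum>x\<in>box N. killed_heat s x * gen_apply (box N) m (w s) x) = (\<Sum>x\<in>box N. w s x * w s x)"
    using sum_gen_apply_sym[OF finite_box, where u="killed_heat s" and w="w s"]
    unfolding w_def by simp
  then have "- (\<Sum>x\<in>box N. w s x * w s x + killed_heat s x * gen_apply (box N) m (w s) x) \<le> 0"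
    by (simp add: sum.distrib sum_nonneg)
  then show ?thesis using D by blast
qed

lemma killed_mass_0: "killed_mass 0 = 1"
proof -
  have "killed_mass 0 = (\<Sum>x\<in>(box N :: 'd site set). if x = 0 then 1 else 0)"
    unfolding killed_mass_def killed_heat_0 by (rule sum.cong) auto
  also have "\<dots> = 1" by (simp add: sum.delta[OF finite_box] zero_in_box)
  finally show ?thesis .
qed

lemma killed_mass_nonneg: "0 \<le> killed_mass s"
  unfolding killed_mass_def by (simp add: sum_nonneg)

lemma killed_mass_nash:
  assumes s: "0 \<le> s" and R: "0 < R"
  shows "killed_mass s \<le> (2 * 4 ^ CARD('d)) * (real R)\<^sup>2 * killed_energy s + 2 / real R ^ CARD('d)"
proof -
  have "killed_mass s \<le> 2 * 4 ^ CARD('d) * (real R)\<^sup>2 * grad_sq_sum (killed_heat s)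
      + 2 * (lsum (killed_heat s))\<^sup>2 / real R ^ CARD('d)"
    unfolding killed_mass_eq_lsum
    by (rule nash_inequality[OF fsupp_killed_heat killed_heat_nonneg[OF s] R])
  also have "\<dots> \<le> (2 * 4 ^ CARD('d)) * (real R)\<^sup>2 * killed_energy s + 2 / real R ^ CARD('d)"
  proof (rule add_mono)
    show "2 * 4 ^ CARD('d) * (real R)\<^sup>2 * grad_sq_sum (killed_heat s)
        \<le> (2 * 4 ^ CARD('d)) * (real R)\<^sup>2 * killed_energy s"
      by (intro mult_left_mono grad_sq_sum_le_killed_energy) auto
    have "0 \<le> lsum (killed_heat s)"
      by (rule lsum_nonneg[OF fsupp_killed_heat killed_heat_nonneg[OF s]])
    then have "(lsum (killed_heat s))\<^sup>2 \<le> 1" using lsum_killed_heat[OF s] by (simp add: power_le_one)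
    then show "2 * (lsum (killed_heat s))\<^sup>2 / real R ^ CARD('d) \<le> 2 / real R ^ CARD('d)"
      by (intro divide_right_mono) auto
  qed
  finally show ?thesis .
qed

lemma killed_energy_decay:
  assumes "1 \<le> t"
  shows "killed_energy t \<le> energy_decay_const (2 * 4 ^ CARD('d)) CARD('d)
                            / (t + 1) powr (real CARD('d) / 2 + 1)"
  by (rule energy_decay[OF _ _ killed_mass_deriv killed_energy_deriv killed_energy_nonneg
        eq_refl[OF killed_mass_0] killed_mass_nonneg killed_mass_nash assms]) simp_all

lemma grad_sq_sum_killed_heat_le: "0 \<le> t \<Longrightarrow> grad_sq_sum (killed_heat t) \<le> 4 * real CARD('d)"
proof -
  assume t: "0 \<le> t"
  have "killed_mass t \<le> killed_mass 0"
    by (rule mass_antitone[OF killed_mass_deriv killed_energy_nonneg order_refl t])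
  then have "lsum (\<lambda>x. (killed_heat t x)\<^sup>2) \<le> 1"
    unfolding killed_mass_0 killed_mass_eq_lsum[of t, symmetric] .
  then show ?thesis
    using grad_sq_sum_le_l2[OF fsupp_killed_heat, of t] by (simp add: mult_left_mono order_trans)
qed

lemma killed_kernel_gradient_decay:
  assumes t: "0 \<le> t" and v: "v \<in> insert 0 units"
  shows "lsum (\<lambda>y. (killed_kernel N m t 0 (y - v) - killed_kernel N m t 0 y)\<^sup>2)
           \<le> gradient_decay_const CARD('d) / (t + 1) powr (real CARD('d) / 2 + 1)"
proof -
  let ?p = "real CARD('d) / 2 + 1"
  have k: "killed_kernel N m t 0 = killed_heat t"
    unfolding killed_heat_def by (rule ext) (simp add: killed_kernel_sym)
  have "lsum (\<lambda>y. (killed_kernel N m t 0 (y - v) - killed_kernel N m t 0 y)\<^sup>2)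
      \<le> grad_sq_sum (killed_heat t)"
    unfolding k by (rule lsum_sq_difference_le_grad_sq_sum[OF fsupp_killed_heat v])
  also have "\<dots> \<le> gradient_decay_const CARD('d) / (t + 1) powr ?p"
  proof (cases "1 \<le> t")
    case True
    have "grad_sq_sum (killed_heat t) \<le> killed_energy t" by (rule grad_sq_sum_le_killed_energy)
    also have "\<dots> \<le> energy_decay_const (2 * 4 ^ CARD('d)) CARD('d) / (t + 1) powr ?p"
      by (rule killed_energy_decay[OF True])
    also have "\<dots> \<le> gradient_decay_const CARD('d) / (t + 1) powr ?p"
      unfolding gradient_decay_const_def by (intro divide_right_mono) auto
    finally show ?thesis .
  next
    case False
    have "(t + 1) powr ?p \<le> 2 powr ?p" using False t by (intro powr_mono2) auto
    then have "4 * real CARD('d) \<le> 4 * real CARD('d) * 2 powr ?p / (t + 1) powr ?p"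
      using t by (simp add: le_divide_eq)
    also have "\<dots> \<le> gradient_decay_const CARD('d) / (t + 1) powr ?p"
      unfolding gradient_decay_const_def
      using energy_decay_const_pos[of "2 * 4 ^ CARD('d)" "CARD('d)"] t
      by (intro divide_right_mono) auto
    finally show ?thesis using grad_sq_sum_killed_heat_le[OF t] by linarith
  qed
  finally show ?thesis .
qed

end

section \<open>Translations of edges\<close>

lemma countable_edges: "countable (lattice_edges :: ('d::finite) site set set)"
proof -
  have "lattice_edges = (\<Union>j\<in>(UNIV::'d set). (\<lambda>x. {x, x + unitv j}) ` UNIV)"
    by (auto simp: lattice_edges_def)
  moreover have "countable (\<Union>j\<in>(UNIV::'d set). (\<lambda>x::'d site. {x, x + unitv j}) ` UNIV)"
    by (rule countable_UN, rule countable_finite, simp, rule countable_image, rule countableI_type)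
  ultimately show ?thesis by simp
qed

definition edge_shift :: "('d::finite) site \<Rightarrow> 'd site set \<Rightarrow> 'd site set" where
  "edge_shift z e = (\<lambda>v. v + z) ` e"

lemma edge_shift_lattice_edge: "e \<in> lattice_edges \<Longrightarrow> edge_shift z e \<in> lattice_edges"
proof -
  assume "e \<in> lattice_edges"
  then obtain x j where e: "e = {x, x + unitv j}" by (auto simp: lattice_edges_def)
  have "edge_shift z e = {x + z, (x + z) + unitv j}" unfolding e edge_shift_def by (auto simp: add_ac)
  then show ?thesis by (simp add: unitv_edge)
qed

lemma edge_shift_inverse: "edge_shift (- z) (edge_shift z e) = e"
  unfolding edge_shift_def by (auto simp: image_image)

lemma edge_shift_inj: "inj (edge_shift z)"
  by (rule inj_on_inverseI[where g="edge_shift (- z)"]) (rule edge_shift_inverse)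

lemma edge_shift_lattice_edge_iff: "edge_shift z e \<in> lattice_edges \<longleftrightarrow> e \<in> lattice_edges"
  using edge_shift_lattice_edge[of e z] edge_shift_lattice_edge[of "edge_shift z e" "- z"] edge_shift_inverse[of z e] by auto

lemma shift_eq_edge_shift: "shift z \<omega> = (\<lambda>e. \<omega> (edge_shift z e))"
  unfolding shift_def edge_shift_def ..

lemma shift_Omega: "\<omega> \<in> Omega \<Longrightarrow> shift z \<omega> \<in> Omega"
  unfolding Omega_def shift_eq_edge_shift
  by (auto simp: PiE_iff extensional_def edge_shift_lattice_edge_iff edge_shift_lattice_edge)

text \<open>Completes an environment known on \<open>J\<close> by an arbitrary admissible value; off the lattice it
  is \<open>undefined\<close>, as are the elements of \<open>Omega\<close>.\<close>
definition extend_one :: "('d::finite) site set set \<Rightarrow> 'd env \<Rightarrow> 'd env" where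
  "extend_one J r = (\<lambda>e. if e \<in> J then r e else if e \<in> lattice_edges then 1 else undefined)"

lemma extend_one_Omega: "\<omega> \<in> Omega \<Longrightarrow> extend_one J (restrict \<omega> J) \<in> Omega"
  unfolding Omega_def extend_one_def by (auto simp: PiE_iff extensional_def)

lemma determines_shift_extend:
  assumes det: "determines S h" and \<omega>: "\<omega> \<in> Omega"
  shows "h (shift y \<omega>) = h (shift y (extend_one (edge_shift y ` S) (restrict \<omega> (edge_shift y ` S))))"
proof -
  let ?w = "extend_one (edge_shift y ` S) (restrict \<omega> (edge_shift y ` S))"
  have "?w \<in> Omega" by (rule extend_one_Omega[OF \<omega>])
  moreover have "\<forall>e\<in>S. shift y \<omega> e = shift y ?w e"
    by (auto simp: shift_eq_edge_shift extend_one_def)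
  ultimately show ?thesis
    using det \<omega> shift_Omega unfolding determines_def by blast
qed

lemma edge_shift_disjoint:
  assumes S: "S \<subseteq> lattice_edges" and nd: "y' - y \<notin> (\<lambda>(b, c). b - c) ` (\<Union>S \<times> \<Union>S)"
  shows "edge_shift y ` S \<inter> edge_shift y' ` S = {}"
proof (rule ccontr)
  assume "edge_shift y ` S \<inter> edge_shift y' ` S \<noteq> {}"
  then obtain e e' where e: "e \<in> S" "e' \<in> S" "edge_shift y e = edge_shift y' e'" by auto
  obtain x j where ex: "e = {x, x + unitv j}" using e(1) S by (auto simp: lattice_edges_def)
  have "x + y \<in> edge_shift y e" unfolding ex edge_shift_def by auto
  then have "x + y \<in> edge_shift y' e'" using e(3) by simp
  then obtain c where c: "c \<in> e'" "x + y = c + y'" unfolding edge_shift_def by auto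
  have "y' - y = x - c" using c(2) by (simp add: algebra_simps)
  moreover have "x \<in> \<Union>S" "c \<in> \<Union>S" using e ex c by auto
  ultimately have "y' - y \<in> (\<lambda>(b, c). b - c) ` (\<Union>S \<times> \<Union>S)" by force
  then show False using nd by simp
qed

section \<open>Sums with few correlated pairs\<close>

lemma abs_mult_le_mean_sq: "\<bar>a * b\<bar> \<le> (a\<^sup>2 + b\<^sup>2) / (2::real)"
proof -
  have "0 \<le> (\<bar>a\<bar> - \<bar>b\<bar>)\<^sup>2" by simp
  then have "2 * (\<bar>a\<bar> * \<bar>b\<bar>) \<le> \<bar>a\<bar>\<^sup>2 + \<bar>b\<bar>\<^sup>2" by (simp add: power2_eq_square algebra_simps)
  then show ?thesis by (simp add: abs_mult)
qed

lemma sum_indicator_difference_le: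
  fixes D :: "'a::ab_group_add set"
  assumes F: "finite F" and D: "finite D" and c: "0 \<le> c"
  shows "(\<Sum>y'\<in>F. if y' - y \<in> D then c else 0) \<le> real (card D) * c"
    and "(\<Sum>y\<in>F. if y' - y \<in> D then c else 0) \<le> real (card D) * c"
proof -
  have "card {y'\<in>F. y' - y \<in> D} \<le> card D"
    by (rule card_inj_on_le[where f="\<lambda>y'. y' - y"]) (use D in \<open>auto simp: inj_on_def\<close>)
  then show "(\<Sum>y'\<in>F. if y' - y \<in> D then c else 0) \<le> real (card D) * c"
    using F c by (simp add: sum.inter_filter[symmetric] mult_right_mono)
  have "card {y\<in>F. y' - y \<in> D} \<le> card D"
    by (rule card_inj_on_le[where f="\<lambda>y. y' - y"]) (use D in \<open>auto simp: inj_on_def\<close>)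
  then show "(\<Sum>y\<in>F. if y' - y \<in> D then c else 0) \<le> real (card D) * c"
    using F c by (simp add: sum.inter_filter[symmetric] mult_right_mono)
qed

lemma sum_close_pairs_le:
  fixes a :: "'a::ab_group_add \<Rightarrow> real"
  assumes F: "finite F" and D: "finite D"
  shows "(\<Sum>y\<in>F. \<Sum>y'\<in>F. if y' - y \<in> D then \<bar>a y\<bar> * \<bar>a y'\<bar> else 0) \<le> real (card D) * (\<Sum>y\<in>F. (a y)\<^sup>2)"
proof -
  have "(\<Sum>y\<in>F. \<Sum>y'\<in>F. if y' - y \<in> D then \<bar>a y\<bar> * \<bar>a y'\<bar> else 0)
     \<le> (\<Sum>y\<in>F. \<Sum>y'\<in>F. (if y' - y \<in> D then (a y)\<^sup>2 / 2 else 0) + (if y' - y \<in> D then (a y')\<^sup>2 / 2 else 0))"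
  proof (intro sum_mono)
    fix y y'
    have "\<bar>a y\<bar> * \<bar>a y'\<bar> \<le> (a y)\<^sup>2 / 2 + (a y')\<^sup>2 / 2"
      using abs_mult_le_mean_sq[of "a y" "a y'"] by (simp add: abs_mult add_divide_distrib)
    then show "(if y' - y \<in> D then \<bar>a y\<bar> * \<bar>a y'\<bar> else 0)
        \<le> (if y' - y \<in> D then (a y)\<^sup>2 / 2 else 0) + (if y' - y \<in> D then (a y')\<^sup>2 / 2 else 0)"
      by simp
  qed
  also have "\<dots> = (\<Sum>y\<in>F. \<Sum>y'\<in>F. if y' - y \<in> D then (a y)\<^sup>2 / 2 else 0)
                + (\<Sum>y'\<in>F. \<Sum>y\<in>F. if y' - y \<in> D then (a y')\<^sup>2 / 2 else 0)"
  proof -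
    have "(\<Sum>y\<in>F. \<Sum>y'\<in>F. if y' - y \<in> D then (a y')\<^sup>2 / 2 else 0)
        = (\<Sum>y'\<in>F. \<Sum>y\<in>F. if y' - y \<in> D then (a y')\<^sup>2 / 2 else 0)"
      by (rule sum.swap)
    then show ?thesis by (simp only: sum.distrib)
  qed
  also have "\<dots> \<le> (\<Sum>y\<in>F. real (card D) * ((a y)\<^sup>2 / 2)) + (\<Sum>y'\<in>F. real (card D) * ((a y')\<^sup>2 / 2))"
    by (intro add_mono sum_mono sum_indicator_difference_le F D) simp_all
  also have "\<dots> = real (card D) * (\<Sum>y\<in>F. (a y)\<^sup>2)"
    by (simp add: sum_distrib_left[symmetric] sum_divide_distrib[symmetric])
  finally show ?thesis .
qed

text \<open>Covariance bookkeeping: the mean \<open>c\<^sup>2\<close> cancels because the weights sum to zero, and only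
  pairs whose difference lies in \<open>D\<close> are correlated.\<close>
lemma sum_pairs_centred_le:
  fixes a :: "'a::ab_group_add \<Rightarrow> real" and E :: "'a \<Rightarrow> 'a \<Rightarrow> real"
  assumes F: "finite F" and D: "finite D" and sum0: "(\<Sum>y\<in>F. a y) = 0"
    and Eb: "\<And>y y'. \<bar>E y y'\<bar> \<le> H" and c2: "c\<^sup>2 \<le> H"
    and Eind: "\<And>y y'. y' - y \<notin> D \<Longrightarrow> E y y' = c\<^sup>2"
  shows "(\<Sum>y\<in>F. \<Sum>y'\<in>F. a y * a y' * E y y') \<le> 2 * H * real (card D) * (\<Sum>y\<in>F. (a y)\<^sup>2)"
proof -
  have H0: "0 \<le> H" using c2 by (meson order_trans zero_le_power2)
  have "(\<Sum>y'\<in>F. a y * a y' * c\<^sup>2) = a y * c\<^sup>2 * (\<Sum>y'\<in>F. a y')" for y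
    unfolding sum_distrib_left by (simp add: mult_ac)
  then have Z: "(\<Sum>y\<in>F. \<Sum>y'\<in>F. a y * a y' * c\<^sup>2) = 0" by (simp add: sum0)
  have "(\<Sum>y\<in>F. \<Sum>y'\<in>F. a y * a y' * E y y') = (\<Sum>y\<in>F. \<Sum>y'\<in>F. a y * a y' * (E y y' - c\<^sup>2))"
    using Z by (simp add: right_diff_distrib sum_subtractf)
  also have "\<dots> \<le> (\<Sum>y\<in>F. \<Sum>y'\<in>F. (if y' - y \<in> D then \<bar>a y\<bar> * \<bar>a y'\<bar> else 0) * (2 * H))"
  proof (intro sum_mono)
    fix y y'
    have "\<bar>E y y' - c\<^sup>2\<bar> \<le> 2 * H"
      using abs_triangle_ineq4[of "E y y'" "c\<^sup>2"] Eb[of y y'] c2 by simp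
    have "a y * a y' * (E y y' - c\<^sup>2) \<le> \<bar>a y\<bar> * \<bar>a y'\<bar> * \<bar>E y y' - c\<^sup>2\<bar>"
      by (simp add: abs_mult[symmetric])
    also have "\<dots> \<le> \<bar>a y\<bar> * \<bar>a y'\<bar> * (2 * H)"
      by (rule mult_left_mono[OF \<open>\<bar>E y y' - c\<^sup>2\<bar> \<le> 2 * H\<close>]) simp
    finally have "a y * a y' * (E y y' - c\<^sup>2) \<le> \<bar>a y\<bar> * \<bar>a y'\<bar> * (2 * H)" .
    then show "a y * a y' * (E y y' - c\<^sup>2) \<le> (if y' - y \<in> D then \<bar>a y\<bar> * \<bar>a y'\<bar> else 0) * (2 * H)"
      by (simp add: Eind)
  qed
  also have "\<dots> = 2 * H * (\<Sum>y\<in>F. \<Sum>y'\<in>F. if y' - y \<in> D then \<bar>a y\<bar> * \<bar>a y'\<bar> else 0)"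
    by (simp add: sum_distrib_left sum_distrib_right mult_ac)
  also have "\<dots> \<le> 2 * H * (real (card D) * (\<Sum>y\<in>F. (a y)\<^sup>2))"
    by (intro mult_left_mono sum_close_pairs_le F D) (use H0 in simp)
  finally show ?thesis by (simp add: mult_ac)
qed

lemma finite_Union_edges:
  assumes "finite S" "S \<subseteq> lattice_edges"
  shows "finite (\<Union>S)"
proof (rule finite_Union[OF assms(1)])
  fix e assume "e \<in> S"
  then obtain x j where "e = {x, x + unitv j}" using assms(2) by (auto simp: lattice_edges_def)
  then show "finite e" by simp
qed

lemma card_differences_le:
  assumes "finite A"
  shows "card ((\<lambda>(b, c). b - c) ` (A \<times> A)) \<le> (card A)\<^sup>2"
proof -
  have "card ((\<lambda>(b, c). b - c) ` (A \<times> A)) \<le> card (A \<times> A)" by (rule card_image_le) (use assms in simp)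
  also have "\<dots> = (card A)\<^sup>2" by (simp add: card_cartesian_product power2_eq_square)
  finally show ?thesis .
qed

section \<open>Support of local functions\<close>

lemma determines_Int:
  assumes "determines A h" "determines B h"
  shows "determines (A \<inter> B) h"
  unfolding determines_def
proof (intro ballI impI)
  fix \<omega> \<omega>' assume w: "\<omega> \<in> Omega" "\<omega>' \<in> Omega" and ag: "\<forall>e\<in>A \<inter> B. \<omega> e = \<omega>' e"
  define w where "w = (\<lambda>e. if e \<in> A then \<omega> e else \<omega>' e)"
  have wO: "w \<in> Omega" using w unfolding w_def Omega_def by (simp add: PiE_iff extensional_def)
  have a1: "\<forall>e\<in>A. \<omega> e = w e" by (simp add: w_def)
  have a2: "\<forall>e\<in>B. w e = \<omega>' e" using ag by (simp add: w_def)
  have "h \<omega> = h w" using assms(1) w(1) wO a1 unfolding determines_def by blast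
  also have "h w = h \<omega>'" using assms(2) w(2) wO a2 unfolding determines_def by blast
  finally show "h \<omega> = h \<omega>'" .
qed

lemma determines_Inter_fin:
  assumes "finite E" "determines A h" "\<forall>e\<in>E. determines (Bf e) h"
  shows "determines (A \<inter> \<Inter>(Bf ` E)) h"
  using assms
proof (induction E rule: finite_induct)
  case empty then show ?case by simp
next
  case (insert e E)
  have "A \<inter> \<Inter>(Bf ` insert e E) = (A \<inter> \<Inter>(Bf ` E)) \<inter> Bf e" by auto
  then show ?case using insert by (simp add: determines_Int)
qed

text \<open>Only finitely many determining sets need to be intersected: one given determining set and,
  for each of its edges outside the intersection, one determining set missing that edge.\<close>
lemma supp_local:
  assumes "is_local g"
  shows "finite (supp g) \<and> supp g \<subseteq> lattice_edges \<and> determines (supp g) (g 0)"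
proof -
  define \<F> where "\<F> = {S. finite S \<and> S \<subseteq> lattice_edges \<and> determines S (g 0)}"
  obtain S0 where S0: "S0 \<in> \<F>" using assms unfolding is_local_def \<F>_def by blast
  have su: "supp g = \<Inter>\<F>" unfolding supp_def \<F>_def ..
  define E where "E = S0 - \<Inter>\<F>"
  define Bf where "Bf e = (SOME S. S \<in> \<F> \<and> e \<notin> S)" for e
  have Bf: "Bf e \<in> \<F> \<and> e \<notin> Bf e" if "e \<in> E" for e
  proof -
    have "\<exists>S. S \<in> \<F> \<and> e \<notin> S" using that unfolding E_def by auto
    then show ?thesis unfolding Bf_def by (rule someI_ex)
  qed
  have eq: "\<Inter>\<F> = S0 \<inter> \<Inter>(Bf ` E)"
    using S0 Bf unfolding E_def by blast
  have finE: "finite E" unfolding E_def using S0 by (simp add: \<F>_def)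
  have "determines (S0 \<inter> \<Inter>(Bf ` E)) (g 0)"
  proof (rule determines_Inter_fin[OF finE])
    show "determines S0 (g 0)" using S0 by (simp add: \<F>_def)
    show "\<forall>e\<in>E. determines (Bf e) (g 0)" using Bf by (simp add: \<F>_def)
  qed
  then have d: "determines (\<Inter>\<F>) (g 0)" unfolding eq .
  have sub: "\<Inter>\<F> \<subseteq> S0" using S0 by blast
  have f: "finite (\<Inter>\<F>)" by (rule finite_subset[OF sub]) (use S0 in \<open>simp add: \<F>_def\<close>)
  have l: "\<Inter>\<F> \<subseteq> lattice_edges" using sub S0 unfolding \<F>_def by auto
  show ?thesis unfolding su using d f l by simp
qed

section \<open>Approximation by killed kernels\<close>

lemma integral_count_space_eq_infsum:
  fixes f :: "'a \<Rightarrow> real"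
  assumes "integrable (count_space UNIV) f"
  shows "integral\<^sup>L (count_space UNIV) f = infsum f UNIV"
proof -
  have "Infinite_Set_Sum.abs_summable_on f UNIV" unfolding abs_summable_on_def by (rule assms)
  then have "infsetsum f UNIV = infsum f UNIV" by (rule infsetsum_infsum)
  then show ?thesis unfolding infsetsum_def .
qed

lemma infsum_dominated_tendsto:
  fixes k :: "'a \<Rightarrow> real" and kN :: "nat \<Rightarrow> 'a \<Rightarrow> real" and f :: "'a \<Rightarrow> real"
  assumes sm: "(\<lambda>y. k y * f y) summable_on UNIV"
    and b: "\<And>N y. \<bar>kN N y\<bar> \<le> \<bar>k y\<bar>"
    and lim: "\<And>y. (\<lambda>N. kN N y) \<longlonglongrightarrow> k y"
  shows "(\<lambda>N. infsum (\<lambda>y. kN N y * f y) UNIV) \<longlonglongrightarrow> infsum (\<lambda>y. k y * f y) UNIV"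
proof -
  let ?M = "count_space (UNIV::'a set)"
  have "Infinite_Sum.abs_summable_on (\<lambda>y. k y * f y) UNIV"
    using sm by (rule summable_on_iff_abs_summable_on_real[THEN iffD1])
  then have "Infinite_Set_Sum.abs_summable_on (\<lambda>y. k y * f y) UNIV"
    by (rule abs_summable_equivalent[THEN iffD1])
  then have int: "integrable ?M (\<lambda>y. k y * f y)"
    unfolding abs_summable_on_def .
  have intw: "integrable ?M (\<lambda>y. \<bar>k y * f y\<bar>)" by (rule integrable_abs[OF int])
  have bd: "AE y in ?M. norm (kN N y * f y) \<le> \<bar>k y * f y\<bar>" for N
  proof (rule AE_I2)
    fix y
    have "\<bar>kN N y\<bar> * \<bar>f y\<bar> \<le> \<bar>k y\<bar> * \<bar>f y\<bar>" by (intro mult_right_mono b) simp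
    then show "norm (kN N y * f y) \<le> \<bar>k y * f y\<bar>" by (simp add: abs_mult)
  qed
  have lm: "AE y in ?M. (\<lambda>N. kN N y * f y) \<longlonglongrightarrow> k y * f y"
    by (rule AE_I2) (intro tendsto_mult_right lim)
  have iN: "integrable ?M (\<lambda>y. kN N y * f y)" for N
    by (rule integrable_dominated_convergence2[OF _ _ intw lm bd]) simp_all
  have L: "(\<lambda>N. integral\<^sup>L ?M (\<lambda>y. kN N y * f y)) \<longlonglongrightarrow> integral\<^sup>L ?M (\<lambda>y. k y * f y)"
    by (rule integral_dominated_convergence[OF _ _ intw lm bd]) simp_all
  show ?thesis using L unfolding integral_count_space_eq_infsum[OF iN] integral_count_space_eq_infsum[OF int] .
qed

lemma Pt_sq_le_liminf_killed:
  assumes m0: "\<forall>e\<in>lattice_edges. 0 \<le> m e" and t: "0 \<le> t"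
  shows "ennreal ((Pt m t f 0 \<omega>)\<^sup>2)
           \<le> liminf (\<lambda>N. ennreal ((lsum (\<lambda>y. killed_kernel N m t 0 y * f y \<omega>))\<^sup>2))"
proof (cases "(\<lambda>y. kernel m t 0 y * f y \<omega>) summable_on UNIV")
  case True
  have "(\<lambda>N. infsum (\<lambda>y. killed_kernel N m t 0 y * f y \<omega>) UNIV)
      \<longlonglongrightarrow> infsum (\<lambda>y. kernel m t 0 y * f y \<omega>) UNIV"
  proof (rule infsum_dominated_tendsto[OF True])
    fix N y
    have "0 \<le> killed_kernel N m t 0 y" "killed_kernel N m t 0 y \<le> kernel m t 0 y"
      by (rule killed_kernel_nonneg[OF m0 t] killed_le_kernel[OF m0 t])+
    then show "\<bar>killed_kernel N m t 0 y\<bar> \<le> \<bar>kernel m t 0 y\<bar>"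
      by (metis abs_of_nonneg order_trans)
  qed (rule killed_kernel_tendsto[OF m0 t])
  then have "(\<lambda>N. ennreal ((lsum (\<lambda>y. killed_kernel N m t 0 y * f y \<omega>))\<^sup>2))
      \<longlonglongrightarrow> ennreal ((Pt m t f 0 \<omega>)\<^sup>2)"
    unfolding lsum_def Pt_def by (intro tendsto_ennrealI tendsto_power)
  then have "liminf (\<lambda>N. ennreal ((lsum (\<lambda>y. killed_kernel N m t 0 y * f y \<omega>))\<^sup>2))
      = ennreal ((Pt m t f 0 \<omega>)\<^sup>2)"
    by (rule lim_imp_Liminf[rotated]) simp
  then show ?thesis by simp
next
  case False
  then show ?thesis by (simp add: Pt_def infsum_not_exists)
qed

lemma lsum_mult_Dgrad:
  fixes k :: "('d::finite) site \<Rightarrow> real"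
  assumes fk: "fsupp k" and ti: "translation_invariant g" and \<omega>: "\<omega> \<in> Omega"
  shows "lsum (\<lambda>y. k y * Dgrad v g y \<omega>) = lsum (\<lambda>y. (k (y - v) - k y) * g 0 (shift y \<omega>))"
proof -
  define X where "X y = g 0 (shift y \<omega>)" for y
  have Dg: "Dgrad v g y \<omega> = X (y + v) - X y" for y
    using ti \<omega> unfolding Dgrad_def X_def translation_invariant_def by simp
  have fsh: "fsupp (\<lambda>y. k (y - v))" using fsupp_shift[OF fk, of "- v"] by simp
  have "lsum (\<lambda>y. k y * Dgrad v g y \<omega>) = lsum (\<lambda>y. k y * X (y + v)) - lsum (\<lambda>y. k y * X y)"
    unfolding Dg right_diff_distrib by (intro lsum_diff fsupp_mult_left fk)
  also have "lsum (\<lambda>y. k y * X (y + v)) = lsum (\<lambda>y. k (y - v) * X y)"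
    using lsum_shift[of "\<lambda>y. k (y - v) * X y" v] by simp
  also have "\<dots> - lsum (\<lambda>y. k y * X y) = lsum (\<lambda>y. (k (y - v) - k y) * X y)"
    unfolding left_diff_distrib by (intro lsum_diff[symmetric] fsupp_mult_left fk fsh)
  finally show ?thesis unfolding X_def .
qed

lemma lsum_killed_kernel_difference:
  "lsum (\<lambda>y. killed_kernel N m t 0 (y - v) - killed_kernel N m t 0 y) = 0"
proof -
  have fk: "fsupp (killed_kernel N m t 0)"
    by (rule fsupp_vanishing_outside[OF finite_box killed_kernel_outside2])
  have "lsum (\<lambda>y. killed_kernel N m t 0 (y - v)) = lsum (killed_kernel N m t 0)"
    using lsum_shift[of "killed_kernel N m t 0" "- v"] by simp
  then show ?thesis using fsupp_shift[OF fk, of "- v"] by (simp add: lsum_diff fk)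
qed

lemma fsupp_killed_kernel_difference:
  "fsupp (\<lambda>y. killed_kernel N m t 0 (y - v) - killed_kernel N m t 0 y)"
proof -
  have fk: "fsupp (killed_kernel N m t 0)"
    by (rule fsupp_vanishing_outside[OF finite_box killed_kernel_outside2])
  show ?thesis using fsupp_shift[OF fk, of "- v"] by (intro fsupp_diff fk) simp
qed

section \<open>The product measure\<close>

locale iid_conductances =
  fixes \<mu> :: "real measure"
  assumes law_prob: "prob_space \<mu>" and law_borel: "sets \<mu> = sets borel"
    and law_ge_1: "emeasure \<mu> {1..} = 1"
begin

lemma prob_space_cond_measure: "prob_space (cond_measure \<mu> :: ('d::finite) env measure)"
  unfolding cond_measure_def by (rule prob_space_PiM) (rule law_prob)

lemma space_law: "space \<mu> = UNIV"
  using sets_eq_imp_space_eq[OF law_borel] by simp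

lemma space_cond_measure: "space (cond_measure \<mu> :: ('d::finite) env measure) = PiE lattice_edges (\<lambda>_. UNIV)"
  unfolding cond_measure_def by (simp add: space_PiM space_law)

lemma AE_conductances_ge_1: "AE \<omega> in (cond_measure \<mu> :: ('d::finite) env measure). \<omega> \<in> Omega \<and> (\<forall>e\<in>lattice_edges. 1 \<le> \<omega> e)"
proof -
  interpret mu: prob_space \<mu> by (rule law_prob)
  have A: "{1..} \<in> sets \<mu>" using law_borel by simp
  have "mu.prob {1..} = 1" using law_ge_1 A by (simp add: mu.emeasure_eq_measure)
  then have ae1: "AE x in \<mu>. x \<in> {1..}" by (rule mu.AE_prob_1)
  have "\<forall>e\<in>lattice_edges. AE \<omega> in (cond_measure \<mu> :: 'd env measure). 1 \<le> \<omega> e"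
  proof
    fix e :: "'d site set" assume e: "e \<in> lattice_edges"
    show "AE \<omega> in (cond_measure \<mu> :: 'd env measure). 1 \<le> \<omega> e"
      unfolding cond_measure_def
      by (rule AE_PiM_component[where P="\<lambda>x. 1 \<le> x"]) (use law_prob e ae1 in auto)
  qed
  then have "AE \<omega> in (cond_measure \<mu> :: 'd env measure). \<forall>e\<in>lattice_edges. 1 \<le> \<omega> e"
    by (subst AE_ball_countable[OF countable_edges])
  moreover have "AE \<omega> in (cond_measure \<mu> :: 'd env measure). \<omega> \<in> space (cond_measure \<mu>)"
    by (rule AE_space)
  ultimately show ?thesis
  proof eventually_elim
    case (elim \<omega>)
    then have "\<omega> \<in> Omega" unfolding space_cond_measure Omega_def by (auto simp: PiE_iff intro: order_trans[OF zero_le_one])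
    then show ?case using elim by simp
  qed
qed

lemma shift_space:
  assumes "\<omega> \<in> space (cond_measure \<mu> :: ('d::finite) env measure)"
  shows "shift z \<omega> = (\<lambda>e\<in>lattice_edges. \<omega> (edge_shift z e))"
proof (rule ext)
  fix e :: "'d site set"
  show "shift z \<omega> e = (\<lambda>e\<in>lattice_edges. \<omega> (edge_shift z e)) e"
  proof (cases "e \<in> lattice_edges")
    case False
    then have "edge_shift z e \<notin> lattice_edges" by (simp add: edge_shift_lattice_edge_iff)
    then show ?thesis using assms False unfolding space_cond_measure by (simp add: shift_eq_edge_shift PiE_def extensional_def)
  qed (simp add: shift_eq_edge_shift)
qed

lemma measurable_shift: "shift z \<in> measurable (cond_measure \<mu>) (cond_measure \<mu> :: ('d::finite) env measure)"
proof -
  have "(\<lambda>\<omega>. \<lambda>e\<in>lattice_edges. \<omega> (edge_shift z e)) \<in> measurable (cond_measure \<mu>) (cond_measure \<mu> :: 'd env measure)"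
    unfolding cond_measure_def
    by (rule measurable_restrict) (rule measurable_component_singleton, rule edge_shift_lattice_edge)
  then show ?thesis by (rule measurable_cong[THEN iffD1, rotated]) (simp add: shift_space)
qed

lemma distr_shift: "distr (cond_measure \<mu>) (cond_measure \<mu>) (shift z) = (cond_measure \<mu> :: ('d::finite) env measure)"
proof -
  have "distr (PiM lattice_edges (\<lambda>_. \<mu>)) (PiM lattice_edges (\<lambda>_. \<mu>)) (\<lambda>\<omega>. \<lambda>e\<in>lattice_edges. \<omega> (edge_shift z e))
      = (PiM lattice_edges (\<lambda>_. \<mu>) :: 'd env measure)"
  proof (rule distr_PiM_reindex)
    show "inj_on (edge_shift z) lattice_edges" using edge_shift_inj[of z] by (rule inj_on_subset) simp
    show "edge_shift z \<in> lattice_edges \<rightarrow> lattice_edges" using edge_shift_lattice_edge by auto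
  qed (rule law_prob)
  moreover have "distr (cond_measure \<mu>) (cond_measure \<mu>) (shift z)
      = distr (cond_measure \<mu>) (cond_measure \<mu>) (\<lambda>\<omega>::'d env. \<lambda>e\<in>lattice_edges. \<omega> (edge_shift z e))"
    by (rule distr_cong) (auto simp: shift_space)
  ultimately show ?thesis unfolding cond_measure_def by simp
qed

lemma integral_shift:
  fixes h :: "('d::finite) env \<Rightarrow> real"
  assumes "h \<in> borel_measurable (cond_measure \<mu>)"
  shows "(\<integral>\<omega>. h (shift z \<omega>) \<partial>cond_measure \<mu>) = (\<integral>\<omega>. h \<omega> \<partial>cond_measure \<mu>)"
  using integral_distr[OF measurable_shift assms, of z] by (simp add: distr_shift)

lemma integrable_shift:
  fixes h :: "('d::finite) env \<Rightarrow> real"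
  assumes "h \<in> borel_measurable (cond_measure \<mu>)" "integrable (cond_measure \<mu>) h"
  shows "integrable (cond_measure \<mu>) (\<lambda>\<omega>. h (shift z \<omega>))"
  using integrable_distr_eq[OF measurable_shift assms(1), of z] assms(2) by (simp add: distr_shift)

lemma indep_vars_coordinates:
  "prob_space.indep_vars (cond_measure \<mu>) (\<lambda>_. \<mu>) (\<lambda>i \<omega>. \<omega> i) (lattice_edges :: ('d::finite) site set set)"
proof -
  interpret P: prob_space "cond_measure \<mu> :: 'd env measure" by (rule prob_space_cond_measure)
  have ne: "(lattice_edges :: 'd site set set) \<noteq> {}" using unitv_edge by blast
  have rv: "\<And>i. i \<in> lattice_edges \<Longrightarrow> (\<lambda>\<omega>::'d env. \<omega> i) \<in> measurable (cond_measure \<mu>) \<mu>"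
    unfolding cond_measure_def by (rule measurable_component_singleton)
  have "distr (cond_measure \<mu>) (PiM lattice_edges (\<lambda>_. \<mu>)) (\<lambda>x. \<lambda>i\<in>lattice_edges. x i)
      = (PiM lattice_edges (\<lambda>i. distr (cond_measure \<mu>) \<mu> (\<lambda>\<omega>::'d env. \<omega> i)))"
  proof -
    have "distr (cond_measure \<mu>) (PiM lattice_edges (\<lambda>_. \<mu>)) (\<lambda>x. \<lambda>i\<in>lattice_edges. x i)
        = distr (cond_measure \<mu>) (cond_measure \<mu>) (\<lambda>x::'d env. x)"
      by (rule distr_cong) (auto simp: cond_measure_def space_PiM PiE_def extensional_restrict)
    also have "\<dots> = cond_measure \<mu>" by simp
    also have "\<dots> = (PiM lattice_edges (\<lambda>i. distr (cond_measure \<mu>) \<mu> (\<lambda>\<omega>::'d env. \<omega> i)))"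
      unfolding cond_measure_def
    proof (rule PiM_cong)
      fix x :: "'d site set" assume x: "x \<in> lattice_edges"
      show "\<mu> = distr (Pi\<^sub>M lattice_edges (\<lambda>_. \<mu>)) \<mu> (\<lambda>\<omega>. \<omega> x)"
        by (rule distr_PiM_component[symmetric]) (use law_prob x in auto)
    qed simp
    finally show ?thesis .
  qed
  then show ?thesis by (subst P.indep_vars_iff_distr_eq_PiM'[OF ne rv]) auto
qed

lemma measurable_extend_one:
  assumes J: "J \<subseteq> lattice_edges"
  shows "extend_one J \<in> measurable (PiM J (\<lambda>_. \<mu>)) (cond_measure \<mu> :: ('d::finite) env measure)"
proof -
  have "(\<lambda>r e. if e \<in> J then r e else if e \<in> lattice_edges then 1 else undefined)
      \<in> measurable (PiM J (\<lambda>_. \<mu>)) (PiM lattice_edges (\<lambda>_. \<mu>) :: 'd env measure)"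
  proof (rule measurable_PiM_single')
    fix e :: "'d site set" assume e: "e \<in> lattice_edges"
    show "(\<lambda>r. if e \<in> J then r e else if e \<in> lattice_edges then 1 else undefined) \<in> measurable (PiM J (\<lambda>_. \<mu>)) \<mu>"
    proof (cases "e \<in> J")
      case True then show ?thesis by (simp add: measurable_component_singleton)
    next
      case False then show ?thesis using e by (simp add: space_law)
    qed
  next
    show "(\<lambda>r e. if e \<in> J then r e else if e \<in> lattice_edges then 1 else undefined)
        \<in> space (PiM J (\<lambda>_. \<mu>)) \<rightarrow> PiE lattice_edges (\<lambda>_. space \<mu>)"
      using J by (auto simp: space_law PiE_def extensional_def)
  qed
  then show ?thesis unfolding extend_one_def[abs_def] cond_measure_def .
qed

lemma sq_integrable_imp_integrable:
  fixes h :: "('d::finite) env \<Rightarrow> real"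
  assumes hm: "h \<in> borel_measurable (cond_measure \<mu>)" and hi: "integrable (cond_measure \<mu>) (\<lambda>\<omega>. (h \<omega>)\<^sup>2)"
  shows "integrable (cond_measure \<mu>) h"
proof -
  interpret P: prob_space "cond_measure \<mu> :: 'd env measure" by (rule prob_space_cond_measure)
  show ?thesis by (rule P.square_integrable_imp_integrable[OF hm hi])
qed

lemma square_integral_le_integral_square:
  fixes h :: "('d::finite) env \<Rightarrow> real"
  assumes hm: "h \<in> borel_measurable (cond_measure \<mu>)" and hi: "integrable (cond_measure \<mu>) (\<lambda>\<omega>. (h \<omega>)\<^sup>2)"
  shows "(\<integral>\<omega>. h \<omega> \<partial>cond_measure \<mu>)\<^sup>2 \<le> (\<integral>\<omega>. (h \<omega>)\<^sup>2 \<partial>cond_measure \<mu>)"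
proof -
  interpret P: prob_space "cond_measure \<mu> :: 'd env measure" by (rule prob_space_cond_measure)
  have hi1: "integrable (cond_measure \<mu>) h" by (rule sq_integrable_imp_integrable[OF hm hi])
  define c where "c = (\<integral>\<omega>. h \<omega> \<partial>cond_measure \<mu>)"
  have "0 \<le> (\<integral>\<omega>. (h \<omega> - c)\<^sup>2 \<partial>cond_measure \<mu>)" by simp
  also have "(\<integral>\<omega>. (h \<omega> - c)\<^sup>2 \<partial>cond_measure \<mu>) = (\<integral>\<omega>. (h \<omega>)\<^sup>2 - 2 * c * h \<omega> + c\<^sup>2 \<partial>cond_measure \<mu>)"
  proof -
    have "(\<lambda>\<omega>. (h \<omega> - c)\<^sup>2) = (\<lambda>\<omega>. (h \<omega>)\<^sup>2 - 2 * c * h \<omega> + c\<^sup>2)"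
      by (rule ext) (simp add: power2_eq_square algebra_simps)
    then show ?thesis by (simp only:)
  qed
  also have "\<dots> = (\<integral>\<omega>. (h \<omega>)\<^sup>2 \<partial>cond_measure \<mu>) - 2 * c * c + c\<^sup>2"
    using hi hi1 by (simp add: c_def P.prob_space)
  finally show ?thesis unfolding c_def by (simp add: power2_eq_square)
qed

lemma shift_factors_through_restrict:
  fixes h :: "('d::finite) env \<Rightarrow> real" and y :: "'d site"
  assumes hm: "h \<in> borel_measurable (cond_measure \<mu>)" and hi: "integrable (cond_measure \<mu>) (\<lambda>\<omega>. (h \<omega>)\<^sup>2)"
    and det: "determines S h" and S: "S \<subseteq> lattice_edges"
  defines "J \<equiv> edge_shift y ` S"
  obtains H where "H \<in> borel_measurable (PiM J (\<lambda>_. \<mu>))"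
    and "integrable (cond_measure \<mu>) (\<lambda>\<omega>. H (restrict \<omega> J))"
    and "(\<integral>\<omega>. H (restrict \<omega> J) \<partial>cond_measure \<mu>) = (\<integral>\<omega>. h \<omega> \<partial>cond_measure \<mu>)"
    and "AE \<omega> in cond_measure \<mu>. H (restrict \<omega> J) = h (shift y \<omega>)"
proof
  define H where "H r = h (shift y (extend_one J r))" for r
  have J: "J \<subseteq> lattice_edges" unfolding J_def using S edge_shift_lattice_edge by auto
  show Hm: "H \<in> borel_measurable (PiM J (\<lambda>_. \<mu>))"
    unfolding H_def[abs_def]
    by (rule measurable_compose[OF measurable_extend_one[OF J] measurable_compose[OF measurable_shift hm]])
  have rm: "(\<lambda>\<omega>. restrict \<omega> J) \<in> measurable (cond_measure \<mu>) (PiM J (\<lambda>_. \<mu>))"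
    unfolding cond_measure_def
    by (rule measurable_restrict) (use J in \<open>auto intro: measurable_component_singleton\<close>)
  have Gm: "(\<lambda>\<omega>. H (restrict \<omega> J)) \<in> borel_measurable (cond_measure \<mu>)"
    using measurable_comp[OF rm Hm] by (simp add: comp_def)
  have shm: "(\<lambda>\<omega>. h (shift y \<omega>)) \<in> borel_measurable (cond_measure \<mu>)"
    by (rule measurable_compose[OF measurable_shift hm])
  show ae: "AE \<omega> in cond_measure \<mu>. H (restrict \<omega> J) = h (shift y \<omega>)"
    using AE_conductances_ge_1
    by eventually_elim (simp add: H_def J_def determines_shift_extend[OF det, symmetric])
  show "integrable (cond_measure \<mu>) (\<lambda>\<omega>. H (restrict \<omega> J))"
    using integrable_cong_AE[OF Gm shm ae] integrable_shift[OF hm sq_integrable_imp_integrable[OF hm hi]]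
    by simp
  show "(\<integral>\<omega>. H (restrict \<omega> J) \<partial>cond_measure \<mu>) = (\<integral>\<omega>. h \<omega> \<partial>cond_measure \<mu>)"
    using integral_cong_AE[OF Gm shm ae] integral_shift[OF hm] by simp
qed

lemma integral_shift_product_disjoint:
  fixes h :: "('d::finite) env \<Rightarrow> real"
  assumes hm: "h \<in> borel_measurable (cond_measure \<mu>)" and hi: "integrable (cond_measure \<mu>) (\<lambda>\<omega>. (h \<omega>)\<^sup>2)"
    and det: "determines S h" and S: "S \<subseteq> lattice_edges"
    and disj: "edge_shift y ` S \<inter> edge_shift y' ` S = {}"
  shows "(\<integral>\<omega>. h (shift y \<omega>) * h (shift y' \<omega>) \<partial>cond_measure \<mu>) = (\<integral>\<omega>. h \<omega> \<partial>cond_measure \<mu>)\<^sup>2"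
proof -
  interpret P: prob_space "cond_measure \<mu> :: 'd env measure" by (rule prob_space_cond_measure)
  define J1 where "J1 = edge_shift y ` S"
  define J2 where "J2 = edge_shift y' ` S"
  obtain H1 where H1m: "H1 \<in> borel_measurable (PiM J1 (\<lambda>_. \<mu>))"
    and i1: "integrable (cond_measure \<mu>) (\<lambda>\<omega>. H1 (restrict \<omega> J1))"
    and int1: "(\<integral>\<omega>. H1 (restrict \<omega> J1) \<partial>cond_measure \<mu>) = (\<integral>\<omega>. h \<omega> \<partial>cond_measure \<mu>)"
    and ae1: "AE \<omega> in cond_measure \<mu>. H1 (restrict \<omega> J1) = h (shift y \<omega>)"
    unfolding J1_def by (rule shift_factors_through_restrict[OF hm hi det S])
  obtain H2 where H2m: "H2 \<in> borel_measurable (PiM J2 (\<lambda>_. \<mu>))"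
    and i2: "integrable (cond_measure \<mu>) (\<lambda>\<omega>. H2 (restrict \<omega> J2))"
    and int2: "(\<integral>\<omega>. H2 (restrict \<omega> J2) \<partial>cond_measure \<mu>) = (\<integral>\<omega>. h \<omega> \<partial>cond_measure \<mu>)"
    and ae2: "AE \<omega> in cond_measure \<mu>. H2 (restrict \<omega> J2) = h (shift y' \<omega>)"
    unfolding J2_def by (rule shift_factors_through_restrict[OF hm hi det S])
  have J: "J1 \<subseteq> lattice_edges" "J2 \<subseteq> lattice_edges"
    unfolding J1_def J2_def using S edge_shift_lattice_edge by auto
  have "P.indep_var (PiM J1 (\<lambda>_. \<mu>)) (\<lambda>\<omega>. restrict \<omega> J1) (PiM J2 (\<lambda>_. \<mu>)) (\<lambda>\<omega>. restrict \<omega> J2)"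
    by (rule P.indep_var_restrict[OF indep_vars_coordinates]) (use disj J in \<open>auto simp: J1_def J2_def\<close>)
  then have "P.indep_var borel (\<lambda>\<omega>. H1 (restrict \<omega> J1)) borel (\<lambda>\<omega>. H2 (restrict \<omega> J2))"
    using P.indep_var_compose[OF _ H1m H2m] by (simp add: comp_def)
  then have "(\<integral>\<omega>. H1 (restrict \<omega> J1) * H2 (restrict \<omega> J2) \<partial>cond_measure \<mu>) = (\<integral>\<omega>. h \<omega> \<partial>cond_measure \<mu>)\<^sup>2"
    using P.indep_var_lebesgue_integral[OF _ i1 i2] int1 int2 by (simp add: power2_eq_square)
  moreover have "(\<integral>\<omega>. H1 (restrict \<omega> J1) * H2 (restrict \<omega> J2) \<partial>cond_measure \<mu>)
      = (\<integral>\<omega>. h (shift y \<omega>) * h (shift y' \<omega>) \<partial>cond_measure \<mu>)"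
  proof (rule integral_cong_AE)
    show "(\<lambda>\<omega>. H1 (restrict \<omega> J1) * H2 (restrict \<omega> J2)) \<in> borel_measurable (cond_measure \<mu>)"
      using borel_measurable_integrable[OF i1] borel_measurable_integrable[OF i2] by measurable
    show "(\<lambda>\<omega>. h (shift y \<omega>) * h (shift y' \<omega>)) \<in> borel_measurable (cond_measure \<mu>)"
      using measurable_shift hm by measurable
    show "AE \<omega> in cond_measure \<mu>. H1 (restrict \<omega> J1) * H2 (restrict \<omega> J2) = h (shift y \<omega>) * h (shift y' \<omega>)"
      using ae1 ae2 by eventually_elim simp
  qed
  ultimately show ?thesis by simp
qed

lemma integrable_shift_sq:
  fixes h :: "('d::finite) env \<Rightarrow> real"
  assumes hm: "h \<in> borel_measurable (cond_measure \<mu>)" and hi: "integrable (cond_measure \<mu>) (\<lambda>\<omega>. (h \<omega>)\<^sup>2)"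
  shows "integrable (cond_measure \<mu>) (\<lambda>\<omega>. (h (shift z \<omega>))\<^sup>2)"
  using integrable_shift[of "\<lambda>\<omega>. (h \<omega>)\<^sup>2" z] hm hi by simp

lemma integrable_shift_product:
  fixes h :: "('d::finite) env \<Rightarrow> real"
  assumes hm: "h \<in> borel_measurable (cond_measure \<mu>)" and hi: "integrable (cond_measure \<mu>) (\<lambda>\<omega>. (h \<omega>)\<^sup>2)"
  shows "integrable (cond_measure \<mu>) (\<lambda>\<omega>. h (shift y \<omega>) * h (shift y' \<omega>))"
proof (rule Bochner_Integration.integrable_bound)
  show "integrable (cond_measure \<mu>) (\<lambda>\<omega>. (h (shift y \<omega>))\<^sup>2 + (h (shift y' \<omega>))\<^sup>2)"
    by (intro Bochner_Integration.integrable_add integrable_shift_sq hm hi)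
  show "(\<lambda>\<omega>. h (shift y \<omega>) * h (shift y' \<omega>)) \<in> borel_measurable (cond_measure \<mu>)"
    using measurable_shift hm by measurable
  show "AE \<omega> in cond_measure \<mu>. norm (h (shift y \<omega>) * h (shift y' \<omega>))
      \<le> norm ((h (shift y \<omega>))\<^sup>2 + (h (shift y' \<omega>))\<^sup>2)"
  proof (rule AE_I2)
    fix \<omega>
    have "\<bar>h (shift y \<omega>) * h (shift y' \<omega>)\<bar> \<le> ((h (shift y \<omega>))\<^sup>2 + (h (shift y' \<omega>))\<^sup>2) / 2"
      by (rule abs_mult_le_mean_sq)
    then show "norm (h (shift y \<omega>) * h (shift y' \<omega>)) \<le> norm ((h (shift y \<omega>))\<^sup>2 + (h (shift y' \<omega>))\<^sup>2)"
      by simp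
  qed
qed

lemma abs_integral_shift_product_le:
  fixes h :: "('d::finite) env \<Rightarrow> real"
  assumes hm: "h \<in> borel_measurable (cond_measure \<mu>)" and hi: "integrable (cond_measure \<mu>) (\<lambda>\<omega>. (h \<omega>)\<^sup>2)"
  shows "\<bar>\<integral>\<omega>. h (shift y \<omega>) * h (shift y' \<omega>) \<partial>cond_measure \<mu>\<bar> \<le> (\<integral>\<omega>. (h \<omega>)\<^sup>2 \<partial>cond_measure \<mu>)"
proof -
  have h2m: "(\<lambda>\<omega>. (h \<omega>)\<^sup>2) \<in> borel_measurable (cond_measure \<mu>)" using hm by measurable
  have "\<bar>\<integral>\<omega>. h (shift y \<omega>) * h (shift y' \<omega>) \<partial>cond_measure \<mu>\<bar>
      \<le> (\<integral>\<omega>. \<bar>h (shift y \<omega>) * h (shift y' \<omega>)\<bar> \<partial>cond_measure \<mu>)"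
    using Bochner_Integration.integral_norm_bound[of "cond_measure \<mu>"] by simp
  also have "\<dots> \<le> (\<integral>\<omega>. ((h (shift y \<omega>))\<^sup>2 + (h (shift y' \<omega>))\<^sup>2) / 2 \<partial>cond_measure \<mu>)"
    by (intro Bochner_Integration.integral_mono abs_mult_le_mean_sq integrable_abs
        integrable_shift_product integrable_divide_zero Bochner_Integration.integrable_add
        integrable_shift_sq hm hi)
  also have "\<dots> = (\<integral>\<omega>. (h \<omega>)\<^sup>2 \<partial>cond_measure \<mu>)"
    using integrable_shift_sq[OF hm hi] integral_shift[OF h2m] by simp
  finally show ?thesis .
qed

lemma sq_sum_shift_expand:
  fixes h :: "('d::finite) env \<Rightarrow> real" and a :: "'d site \<Rightarrow> real"
  shows "(\<Sum>y\<in>F. a y * h (shift y \<omega>))\<^sup>2 = (\<Sum>y\<in>F. \<Sum>y'\<in>F. a y * a y' * (h (shift y \<omega>) * h (shift y' \<omega>)))"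
  by (simp add: power2_eq_square sum_product mult_ac)

lemma integrable_sq_sum_shift:
  fixes h :: "('d::finite) env \<Rightarrow> real"
  assumes hm: "h \<in> borel_measurable (cond_measure \<mu>)" and hi: "integrable (cond_measure \<mu>) (\<lambda>\<omega>. (h \<omega>)\<^sup>2)"
  shows "integrable (cond_measure \<mu>) (\<lambda>\<omega>. (\<Sum>y\<in>F. a y * h (shift y \<omega>))\<^sup>2)"
  unfolding sq_sum_shift_expand
  by (intro Bochner_Integration.integrable_sum Bochner_Integration.integrable_mult_right
      integrable_shift_product hm hi)

lemma integral_sq_sum_shift:
  fixes h :: "('d::finite) env \<Rightarrow> real"
  assumes hm: "h \<in> borel_measurable (cond_measure \<mu>)" and hi: "integrable (cond_measure \<mu>) (\<lambda>\<omega>. (h \<omega>)\<^sup>2)"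
  shows "(\<integral>\<omega>. (\<Sum>y\<in>F. a y * h (shift y \<omega>))\<^sup>2 \<partial>cond_measure \<mu>)
         = (\<Sum>y\<in>F. \<Sum>y'\<in>F. a y * a y' * (\<integral>\<omega>. h (shift y \<omega>) * h (shift y' \<omega>) \<partial>cond_measure \<mu>))"
proof -
  have i: "integrable (cond_measure \<mu>) (\<lambda>\<omega>. a y * a y' * (h (shift y \<omega>) * h (shift y' \<omega>)))" for y y'
    by (intro Bochner_Integration.integrable_mult_right integrable_shift_product hm hi)
  have "(\<integral>\<omega>. (\<Sum>y\<in>F. a y * h (shift y \<omega>))\<^sup>2 \<partial>cond_measure \<mu>)
      = (\<Sum>y\<in>F. \<integral>\<omega>. (\<Sum>y'\<in>F. a y * a y' * (h (shift y \<omega>) * h (shift y' \<omega>))) \<partial>cond_measure \<mu>)"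
    unfolding sq_sum_shift_expand
    by (rule Bochner_Integration.integral_sum) (intro Bochner_Integration.integrable_sum i)
  also have "\<dots> = (\<Sum>y\<in>F. \<Sum>y'\<in>F. \<integral>\<omega>. a y * a y' * (h (shift y \<omega>) * h (shift y' \<omega>)) \<partial>cond_measure \<mu>)"
    by (intro sum.cong refl Bochner_Integration.integral_sum i)
  finally show ?thesis by simp
qed

lemma integral_sq_sum_shift_le:
  fixes h :: "('d::finite) env \<Rightarrow> real" and a :: "'d site \<Rightarrow> real"
  assumes hm: "h \<in> borel_measurable (cond_measure \<mu>)" and hi: "integrable (cond_measure \<mu>) (\<lambda>\<omega>. (h \<omega>)\<^sup>2)"
    and det: "determines S h" and S: "S \<subseteq> lattice_edges" and finS: "finite S"
    and finF: "finite F" and sum0: "(\<Sum>y\<in>F. a y) = 0"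
  shows "(\<integral>\<omega>. (\<Sum>y\<in>F. a y * h (shift y \<omega>))\<^sup>2 \<partial>cond_measure \<mu>)
    \<le> 2 * (real (card (\<Union>S)))\<^sup>2 * (\<Sum>y\<in>F. (a y)\<^sup>2) * (\<integral>\<omega>. (h \<omega>)\<^sup>2 \<partial>cond_measure \<mu>)"
proof -
  define H where "H = (\<integral>\<omega>. (h \<omega>)\<^sup>2 \<partial>cond_measure \<mu>)"
  define D where "D = (\<lambda>(b, c). b - c) ` (\<Union>S \<times> \<Union>S)"
  have finU: "finite (\<Union>S)" by (rule finite_Union_edges[OF finS S])
  have "(\<integral>\<omega>. (\<Sum>y\<in>F. a y * h (shift y \<omega>))\<^sup>2 \<partial>cond_measure \<mu>)
      \<le> 2 * H * real (card D) * (\<Sum>y\<in>F. (a y)\<^sup>2)"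
    unfolding integral_sq_sum_shift[OF hm hi]
  proof (rule sum_pairs_centred_le[OF finF _ sum0])
    show "finite D" unfolding D_def using finU by simp
    show "(\<integral>\<omega>. h \<omega> \<partial>cond_measure \<mu>)\<^sup>2 \<le> H"
      unfolding H_def by (rule square_integral_le_integral_square[OF hm hi])
    show "\<bar>\<integral>\<omega>. h (shift y \<omega>) * h (shift y' \<omega>) \<partial>cond_measure \<mu>\<bar> \<le> H" for y y'
      unfolding H_def by (rule abs_integral_shift_product_le[OF hm hi])
    show "(\<integral>\<omega>. h (shift y \<omega>) * h (shift y' \<omega>) \<partial>cond_measure \<mu>) = (\<integral>\<omega>. h \<omega> \<partial>cond_measure \<mu>)\<^sup>2"
      if "y' - y \<notin> D" for y y'
      using that unfolding D_def
      by (rule integral_shift_product_disjoint[OF hm hi det S edge_shift_disjoint[OF S]])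
  qed
  also have "\<dots> \<le> 2 * H * (real (card (\<Union>S)))\<^sup>2 * (\<Sum>y\<in>F. (a y)\<^sup>2)"
  proof (intro mult_left_mono mult_right_mono)
    have "card D \<le> (card (\<Union>S))\<^sup>2" unfolding D_def by (rule card_differences_le[OF finU])
    then show "real (card D) \<le> (real (card (\<Union>S)))\<^sup>2" by (metis of_nat_le_iff of_nat_power)
  qed (auto simp: H_def sum_nonneg)
  finally show ?thesis unfolding H_def by (simp add: mult_ac)
qed

lemma borel_measurable_lsum_shift:
  fixes h :: "('d::finite) env \<Rightarrow> real"
  assumes hm: "h \<in> borel_measurable (cond_measure \<mu>)" and fa: "fsupp a"
  shows "(\<lambda>\<omega>. lsum (\<lambda>y. a y * h (shift y \<omega>))) \<in> borel_measurable (cond_measure \<mu>)"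
proof -
  have shm: "(\<lambda>\<omega>. h (shift z \<omega>)) \<in> borel_measurable (cond_measure \<mu>)" for z
    by (rule measurable_compose[OF measurable_shift hm])
  have "finite {y. a y \<noteq> 0}" using fa by (simp add: fsupp_def)
  then have "(\<lambda>\<omega>. lsum (\<lambda>y. a y * h (shift y \<omega>))) = (\<lambda>\<omega>. \<Sum>y | a y \<noteq> 0. a y * h (shift y \<omega>))"
    by (intro ext lsum_eq_sum) auto
  moreover have "(\<lambda>\<omega>. \<Sum>y | a y \<noteq> 0. a y * h (shift y \<omega>)) \<in> borel_measurable (cond_measure \<mu>)"
    using shm by measurable
  ultimately show ?thesis by simp
qed

lemma nn_integral_sq_lsum_shift_le:
  fixes h :: "('d::finite) env \<Rightarrow> real" and a :: "'d site \<Rightarrow> real"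
  assumes hm: "h \<in> borel_measurable (cond_measure \<mu>)" and hi: "integrable (cond_measure \<mu>) (\<lambda>\<omega>. (h \<omega>)\<^sup>2)"
    and det: "determines S h" and S: "S \<subseteq> lattice_edges" and finS: "finite S"
    and fa: "fsupp a" and sum0: "lsum a = 0"
  shows "(\<integral>\<^sup>+\<omega>. ennreal ((lsum (\<lambda>y. a y * h (shift y \<omega>)))\<^sup>2) \<partial>cond_measure \<mu>)
    \<le> ennreal (2 * (real (card (\<Union>S)))\<^sup>2 * lsum (\<lambda>y. (a y)\<^sup>2) * (\<integral>\<omega>. (h \<omega>)\<^sup>2 \<partial>cond_measure \<mu>))"
proof -
  let ?F = "{y. a y \<noteq> 0}"
  have finF: "finite ?F" using fa by (simp add: fsupp_def)
  have eq: "lsum (\<lambda>y. a y * h (shift y \<omega>)) = (\<Sum>y\<in>?F. a y * h (shift y \<omega>))" for \<omega>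
    by (rule lsum_eq_sum[OF finF]) simp
  have l2: "lsum (\<lambda>y. (a y)\<^sup>2) = (\<Sum>y\<in>?F. (a y)\<^sup>2)"
    by (rule lsum_eq_sum[OF finF]) simp
  have s0: "(\<Sum>y\<in>?F. a y) = 0" using sum0 fsupp_lsum[OF fa] by simp
  have "(\<integral>\<^sup>+\<omega>. ennreal ((\<Sum>y\<in>?F. a y * h (shift y \<omega>))\<^sup>2) \<partial>cond_measure \<mu>)
      = ennreal (\<integral>\<omega>. (\<Sum>y\<in>?F. a y * h (shift y \<omega>))\<^sup>2 \<partial>cond_measure \<mu>)"
    by (rule nn_integral_eq_integral[OF integrable_sq_sum_shift[OF hm hi]]) simp
  also have "\<dots> \<le> ennreal (2 * (real (card (\<Union>S)))\<^sup>2 * lsum (\<lambda>y. (a y)\<^sup>2) * (\<integral>\<omega>. (h \<omega>)\<^sup>2 \<partial>cond_measure \<mu>))"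
    unfolding l2 by (rule ennreal_leI[OF integral_sq_sum_shift_le[OF hm hi det S finS finF s0]])
  finally show ?thesis unfolding eq .
qed

lemma nn_integral_Pt_Dgrad_sq_le_liminf:
  fixes m :: "('d::finite) env" and g :: "'d site \<Rightarrow> 'd env \<Rightarrow> real" and t :: real and v :: "'d site"
  assumes m1: "\<forall>e\<in>lattice_edges. 1 \<le> m e" and t: "0 \<le> t" and ti: "translation_invariant g"
    and gm: "g 0 \<in> borel_measurable (cond_measure \<mu>)"
  defines "a N y \<equiv> killed_kernel N m t 0 (y - v) - killed_kernel N m t 0 y"
  shows "(\<integral>\<^sup>+\<omega>. ennreal ((Pt m t (Dgrad v g) 0 \<omega>)\<^sup>2) \<partial>cond_measure \<mu>)
     \<le> liminf (\<lambda>N. \<integral>\<^sup>+\<omega>. ennreal ((lsum (\<lambda>y. a N y * g 0 (shift y \<omega>)))\<^sup>2) \<partial>cond_measure \<mu>)"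
proof -
  define X where "X N \<omega> = ennreal ((lsum (\<lambda>y. a N y * g 0 (shift y \<omega>)))\<^sup>2)" for N \<omega>
  have "AE \<omega> in cond_measure \<mu>. ennreal ((Pt m t (Dgrad v g) 0 \<omega>)\<^sup>2) \<le> liminf (\<lambda>N. X N \<omega>)"
    using AE_conductances_ge_1
  proof eventually_elim
    case (elim \<omega>)
    have fk: "fsupp (killed_kernel N m t 0)" for N
      by (rule fsupp_vanishing_outside[OF finite_box killed_kernel_outside2])
    have "ennreal ((Pt m t (Dgrad v g) 0 \<omega>)\<^sup>2)
        \<le> liminf (\<lambda>N. ennreal ((lsum (\<lambda>y. killed_kernel N m t 0 y * Dgrad v g y \<omega>))\<^sup>2))"
      by (rule Pt_sq_le_liminf_killed[OF conductances_nonneg[OF m1] t])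
    then show ?case unfolding X_def a_def lsum_mult_Dgrad[OF fk ti conjunct1[OF elim]] .
  qed
  then have "(\<integral>\<^sup>+\<omega>. ennreal ((Pt m t (Dgrad v g) 0 \<omega>)\<^sup>2) \<partial>cond_measure \<mu>)
      \<le> (\<integral>\<^sup>+\<omega>. liminf (\<lambda>N. X N \<omega>) \<partial>cond_measure \<mu>)"
    by (rule nn_integral_mono_AE)
  also have "\<dots> \<le> liminf (\<lambda>N. \<integral>\<^sup>+\<omega>. X N \<omega> \<partial>cond_measure \<mu>)"
  proof (rule nn_integral_liminf)
    fix N
    have "(\<lambda>\<omega>. lsum (\<lambda>y. a N y * g 0 (shift y \<omega>))) \<in> borel_measurable (cond_measure \<mu>)"
      unfolding a_def by (rule borel_measurable_lsum_shift[OF gm fsupp_killed_kernel_difference])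
    then show "X N \<in> borel_measurable (cond_measure \<mu>)" unfolding X_def[abs_def] by measurable
  qed
  finally show ?thesis unfolding X_def .
qed

lemma nn_integral_Pt_Dgrad_sq_le:
  fixes m :: "('d::finite) env" and g :: "'d site \<Rightarrow> 'd env \<Rightarrow> real"
  assumes m1: "\<forall>e\<in>lattice_edges. 1 \<le> m e" and t: "0 \<le> t" and v: "v \<in> insert 0 units"
    and loc: "is_local g" and ti: "translation_invariant g"
    and gm: "g 0 \<in> borel_measurable (cond_measure \<mu>)" and gi: "integrable (cond_measure \<mu>) (\<lambda>\<omega>. (g 0 \<omega>)\<^sup>2)"
  shows "(\<integral>\<^sup>+\<omega>. ennreal ((Pt m t (Dgrad v g) 0 \<omega>)\<^sup>2) \<partial>cond_measure \<mu>)
     \<le> ennreal (2 * gradient_decay_const CARD('d) * (real (supp_sites g))\<^sup>2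
          * (\<integral>\<omega>. (g 0 \<omega>)\<^sup>2 \<partial>cond_measure \<mu>) / (t + 1) powr (real CARD('d) / 2 + 1))"
proof -
  let ?n = "real (supp_sites g)" and ?H = "\<integral>\<omega>. (g 0 \<omega>)\<^sup>2 \<partial>cond_measure \<mu>"
    and ?B = "gradient_decay_const CARD('d) / (t + 1) powr (real CARD('d) / 2 + 1)"
  have S: "finite (supp g)" "supp g \<subseteq> lattice_edges" "determines (supp g) (g 0)"
    using supp_local[OF loc] by auto
  define a where "a N y = killed_kernel N m t 0 (y - v) - killed_kernel N m t 0 y" for N y
  have "(\<integral>\<^sup>+\<omega>. ennreal ((lsum (\<lambda>y. a N y * g 0 (shift y \<omega>)))\<^sup>2) \<partial>cond_measure \<mu>)
      \<le> ennreal (2 * ?n\<^sup>2 * ?B * ?H)" for N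
  proof -
    have "(\<integral>\<^sup>+\<omega>. ennreal ((lsum (\<lambda>y. a N y * g 0 (shift y \<omega>)))\<^sup>2) \<partial>cond_measure \<mu>)
        \<le> ennreal (2 * ?n\<^sup>2 * lsum (\<lambda>y. (a N y)\<^sup>2) * ?H)"
      unfolding supp_sites_def
      by (rule nn_integral_sq_lsum_shift_le[OF gm gi S(3,2,1)])
         (simp_all add: a_def fsupp_killed_kernel_difference lsum_killed_kernel_difference)
    also have "\<dots> \<le> ennreal (2 * ?n\<^sup>2 * ?B * ?H)"
      using killed_kernel_gradient_decay[OF m1 t v, of N]
      by (intro ennreal_leI mult_right_mono mult_left_mono) (simp_all add: a_def)
    finally show ?thesis .
  qed
  then have bound: "liminf (\<lambda>N. \<integral>\<^sup>+\<omega>. ennreal ((lsum (\<lambda>y. a N y * g 0 (shift y \<omega>)))\<^sup>2) \<partial>cond_measure \<mu>)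
      \<le> ennreal (2 * ?n\<^sup>2 * ?B * ?H)"
    by (intro Liminf_le) simp_all
  have "(\<integral>\<^sup>+\<omega>. ennreal ((Pt m t (Dgrad v g) 0 \<omega>)\<^sup>2) \<partial>cond_measure \<mu>)
      \<le> liminf (\<lambda>N. \<integral>\<^sup>+\<omega>. ennreal ((lsum (\<lambda>y. a N y * g 0 (shift y \<omega>)))\<^sup>2) \<partial>cond_measure \<mu>)"
    unfolding a_def by (rule nn_integral_Pt_Dgrad_sq_le_liminf[OF m1 t ti gm])
  also note bound
  also have "2 * ?n\<^sup>2 * ?B * ?H = 2 * gradient_decay_const CARD('d) * ?n\<^sup>2 * ?H
      / (t + 1) powr (real CARD('d) / 2 + 1)"
    by simp
  finally show ?thesis .
qed

end

theorem proposition9: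
  fixes \<mu> :: "real measure"
  assumes "prob_space \<mu>" and "sets \<mu> = sets borel" and "emeasure \<mu> {1..} = 1"
  shows "\<exists>C>0. AE m in (cond_measure \<mu> :: ('d::finite) env measure).
           \<forall>t\<ge>0. \<forall>v\<in>insert 0 units. \<forall>g :: 'd site \<Rightarrow> 'd env \<Rightarrow> real.
             is_local g \<and> translation_invariant g \<and>
             g 0 \<in> borel_measurable (cond_measure \<mu>) \<and>
             integrable (cond_measure \<mu>) (\<lambda>\<omega>. (g 0 \<omega>)\<^sup>2) \<longrightarrow>
             (\<integral>\<^sup>+ \<omega>. ennreal ((Pt m t (Dgrad v g) 0 \<omega>)\<^sup>2) \<partial>cond_measure \<mu>)
               \<le> ennreal (C * (real (supp_sites g))\<^sup>2 * (\<integral>\<omega>. (g 0 \<omega>)\<^sup>2 \<partial>cond_measure \<mu>)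
                          / (t + 1) powr (real CARD('d) / 2 + 1))"
proof -
  interpret iid_conductances \<mu> using assms by (simp add: iid_conductances_def)
  show ?thesis
  proof (intro exI[of _ "2 * gradient_decay_const CARD('d)"] conjI)
    show "0 < 2 * gradient_decay_const CARD('d)" by (simp add: gradient_decay_const_pos)
  qed (intro eventually_mono[OF AE_conductances_ge_1] allI impI ballI, elim conjE,
       rule nn_integral_Pt_Dgrad_sq_le, assumption+)
qed

end
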